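(* For all CPC processes $P,Q$ and every substitution $\sigma$: if $P\simeq Q$ then $\sigma P\simeq\sigma Q$.
   Context: Concurrent pattern calculus (CPC). Fix a countable set $\mathcal N$ of names. Patterns are $p ::= \lambda x \mid x \mid \ulcorner x\urcorner \mid p\bullet p$ (binding name, variable name, protected name, compound; $\bullet$ is left associative). ${\sf bn}(p)$, ${\sf vn}(p)$, ${\sf pn}(p)$ denote the sets of names occurring in $p$ as binding, variable and protected names, and ${\sf fn}(p)={\sf vn}(p)\cup{\sf pn}(p)$. A pattern is well formed if its binding names are pairwise distinct and distinct from its free names; all patterns are assumed well formed. A pattern is communicable if it contains no protected and no binding names; protection extends to communicable patterns by $\ulcorner p\bullet q\urcorner=\ulcorner p\urcorner\bullet\ulcorner q\urcorner$. A substitution is a partial function with finite domain from names to communicable patterns. On patterns: $\sigma x=\sigma(x)$ if $x\in{\sf dom}(\sigma)$ else $x$; $\sigma\ulcorner x\urcorner=\ulcorner\sigma(x)\urcorner$ if $x\in{\sf dom}(\sigma)$ else $\ulcorner x\urcorner$; $\sigma(\lambda x)=\lambda x$; $\sigma(p\bullet q)=\sigma p\bullet\sigma q$. Unification $\{p\,\|\,q\}$ is a pair of substitutions or undefined: $\{x\|x\}=\{x\|\ulcorner x\urcorner\}=\{\ulcorner x\urcorner\|x\}=\{\ulcorner x\urcorner\|\ulcorner x\urcorner\}=(\{\},\{\})$; $\{\lambda x\|q\}=(\{q/x\},\{\})$ if $q$ is communicable; $\{p\|\lambda x\}=(\{\},\{p/x\})$ if $p$ is communicable; $\{p_1\bullet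 p_2\|q_1\bullet q_2\}=(\sigma_1\cup\sigma_2,\rho_1\cup\rho_2)$ if $\{p_i\|q_i\}=(\sigma_i,\rho_i)$ for $i=1,2$; undefined otherwise. Processes: $P ::= 0 \mid P|P \mid\ !P \mid (\nu x)P \mid p\to P$ (the binding names of $p$ bind in $P$; ${\sf fn}(p\to P)={\sf fn}(p)\cup({\sf fn}(P)\setminus{\sf bn}(p))$; other free names as usual). Substitution on processes is capture avoiding (up to $\alpha$-conversion). Structural congruence $\equiv$ is the least congruence containing $\alpha$-conversion and $P|0\equiv P$, $P|Q\equiv Q|P$, $P|(Q|R)\equiv(P|Q)|R$, $(\nu n)0\equiv 0$, $(\nu n)(\nu m)P\equiv(\nu m)(\nu n)P$, $!P\equiv P|!P$, $P|(\nu n)Q\equiv(\nu n)(P|Q)$ if $n\notin{\sf fn}(P)$. Reduction $\to$ is the least relation with $(p\to P)|(q\to Q)\to\sigma P|\rho Q$ whenever $\{p\|q\}=(\sigma,\rho)$, closed under $P\to P'\Rightarrow P|Q\to P'|Q$ and $(\nu n)P\to(\nu n)P'$, and under $\equiv$ on both sides. Barbs: $P\downarrow_{\tilde m}$ iff $P\equiv(\nu\tilde n)(p\to P'|P'')$ with ${\sf pn}(p)\cap\tilde n=\emptyset$ and $\tilde m={\sf fn}(p)\setminus\tilde n$. A relation $\mathcal R$ is barb preserving if $(P,Q)\in\mathcal R$ and $P\downarrow_{\tilde m}$ imply $Q\downarrow_{\tilde m}$; reduction closed if $(P,Q)\in\mathcal R$ and $P\to P'$ imply $Q\to Q'$ with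 $(P',Q')\in\mathcal R$; context closed if $(P,Q)\in\mathcal R$ implies $(C[P],C[Q])\in\mathcal R$ for every context $C[\cdot]$ (a process with one hole). Barbed congruence $\simeq$ is the largest symmetric, barb preserving, reduction closed and context closed relation on processes. *)

theory Defs
  imports Main
begin

type_synonym name = nat

datatype pat =
    PBind name        (* \<lambda>x  binding name *)
  | PVar name
  | PProt name
  | PComp pat pat     (* p \<bullet> q *)

fun bnl :: "pat \<Rightarrow> name list" where
  "bnl (PBind x) = [x]"
| "bnl (PVar x) = []"
| "bnl (PProt x) = []"
| "bnl (PComp p q) = bnl p @ bnl q"

definition bn :: "pat \<Rightarrow> name set" where
  "bn p = set (bnl p)"

fun vn :: "pat \<Rightarrow> name set" where
  "vn (PBind x) = {}"
| "vn (PVar x) = {x}"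
| "vn (PProt x) = {}"
| "vn (PComp p q) = vn p \<union> vn q"

fun pn :: "pat \<Rightarrow> name set" where
  "pn (PBind x) = {}"
| "pn (PVar x) = {}"
| "pn (PProt x) = {x}"
| "pn (PComp p q) = pn p \<union> pn q"

definition fn :: "pat \<Rightarrow> name set" where
  "fn p = vn p \<union> pn p"

definition wf_pat :: "pat \<Rightarrow> bool" where
  "wf_pat p \<longleftrightarrow> distinct (bnl p) \<and> bn p \<inter> fn p = {}"

definition communicable :: "pat \<Rightarrow> bool" where
  "communicable p \<longleftrightarrow> bn p = {} \<and> pn p = {}"

fun protect :: "pat \<Rightarrow> pat" where
  "protect (PVar x) = PProt x"
| "protect (PComp p q) = PComp (protect p) (protect q)"
| "protect p = p"

type_synonym subst = "name \<rightharpoonup> pat"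

definition is_subst :: "subst \<Rightarrow> bool" where
  "is_subst \<sigma> \<longleftrightarrow> finite (dom \<sigma>) \<and> (\<forall>q\<in>ran \<sigma>. communicable q)"

fun patsub :: "subst \<Rightarrow> pat \<Rightarrow> pat" where
  "patsub \<sigma> (PVar x) = (case \<sigma> x of Some q \<Rightarrow> q | None \<Rightarrow> PVar x)"
| "patsub \<sigma> (PProt x) = (case \<sigma> x of Some q \<Rightarrow> protect q | None \<Rightarrow> PProt x)"
| "patsub \<sigma> (PBind x) = PBind x"
| "patsub \<sigma> (PComp p q) = PComp (patsub \<sigma> p) (patsub \<sigma> q)"

fun unify :: "pat \<Rightarrow> pat \<Rightarrow> (subst \<times> subst) option" where
  "unify (PBind x) q = (if communicable q then Some ([x \<mapsto> q], Map.empty) else None)"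
| "unify p (PBind x) = (if communicable p then Some (Map.empty, [x \<mapsto> p]) else None)"
| "unify (PVar x) (PVar y) = (if x = y then Some (Map.empty, Map.empty) else None)"
| "unify (PVar x) (PProt y) = (if x = y then Some (Map.empty, Map.empty) else None)"
| "unify (PProt x) (PVar y) = (if x = y then Some (Map.empty, Map.empty) else None)"
| "unify (PProt x) (PProt y) = (if x = y then Some (Map.empty, Map.empty) else None)"
| "unify (PComp p1 p2) (PComp q1 q2) =
     (case (unify p1 q1, unify p2 q2) of
        (Some (s1, r1), Some (s2, r2)) \<Rightarrow> Some (s1 ++ s2, r1 ++ r2)
      | _ \<Rightarrow> None)"
| "unify _ _ = None"

datatype proc =
    Zero
  | Par proc proc
  | Rep proc
  | New name proc
  | Case pat proc     (* p \<rightarrow> P *)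

fun fnp :: "proc \<Rightarrow> name set" where
  "fnp Zero = {}"
| "fnp (Par P Q) = fnp P \<union> fnp Q"
| "fnp (Rep P) = fnp P"
| "fnp (New x P) = fnp P - {x}"
| "fnp (Case p P) = fn p \<union> (fnp P - bn p)"

fun wf_proc :: "proc \<Rightarrow> bool" where
  "wf_proc Zero = True"
| "wf_proc (Par P Q) = (wf_proc P \<and> wf_proc Q)"
| "wf_proc (Rep P) = wf_proc P"
| "wf_proc (New x P) = wf_proc P"
| "wf_proc (Case p P) = (wf_pat p \<and> wf_proc P)"

definition fresh :: "name set \<Rightarrow> name" where
  "fresh X = (LEAST n. n \<notin> X)"

fun fresh_list :: "nat \<Rightarrow> name set \<Rightarrow> name list" where
  "fresh_list 0 X = []"
| "fresh_list (Suc n) X = fresh X # fresh_list n (insert (fresh X) X)"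

definition rnames :: "subst \<Rightarrow> name set" where
  "rnames \<sigma> = (\<Union>q\<in>ran \<sigma>. vn q \<union> pn q \<union> bn q)"

fun rename_bn :: "(name \<rightharpoonup> name) \<Rightarrow> pat \<Rightarrow> pat" where
  "rename_bn r (PBind x) = PBind (case r x of Some y \<Rightarrow> y | None \<Rightarrow> x)"
| "rename_bn r (PComp p q) = PComp (rename_bn r p) (rename_bn r q)"
| "rename_bn r p = p"

text \<open>Bound names are renamed to fresh names (avoiding the free names of the
  process and all names of the substitution) before substituting; this is
  capture-avoiding substitution, determined up to alpha-conversion.\<close>
fun psub :: "subst \<Rightarrow> proc \<Rightarrow> proc" where
  "psub \<sigma> Zero = Zero"
| "psub \<sigma> (Par P Q) = Par (psub \<sigma> P) (psub \<sigma> Q)"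
| "psub \<sigma> (Rep P) = Rep (psub \<sigma> P)"
| "psub \<sigma> (New x P) =
     (let y = fresh (fnp (New x P) \<union> dom \<sigma> \<union> rnames \<sigma>)
      in New y (psub (\<sigma>(x \<mapsto> PVar y)) P))"
| "psub \<sigma> (Case p P) =
     (let xs = bnl p;
          ys = fresh_list (length xs) (fnp (Case p P) \<union> dom \<sigma> \<union> rnames \<sigma>)
      in Case (rename_bn (map_of (zip xs ys)) (patsub \<sigma> p))
              (psub (\<sigma> ++ map_of (zip xs (map PVar ys))) P))"

definition swapn :: "name \<Rightarrow> name \<Rightarrow> name \<Rightarrow> name" where
  "swapn a b z = (if z = a then b else if z = b then a else z)"

fun pat_swap :: "name \<Rightarrow> name \<Rightarrow> pat \<Rightarrow> pat" where
  "pat_swap a b (PBind x) = PBind (swapn a b x)"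
| "pat_swap a b (PVar x) = PVar (swapn a b x)"
| "pat_swap a b (PProt x) = PProt (swapn a b x)"
| "pat_swap a b (PComp p q) = PComp (pat_swap a b p) (pat_swap a b q)"

fun proc_swap :: "name \<Rightarrow> name \<Rightarrow> proc \<Rightarrow> proc" where
  "proc_swap a b Zero = Zero"
| "proc_swap a b (Par P Q) = Par (proc_swap a b P) (proc_swap a b Q)"
| "proc_swap a b (Rep P) = Rep (proc_swap a b P)"
| "proc_swap a b (New x P) = New (swapn a b x) (proc_swap a b P)"
| "proc_swap a b (Case p P) = Case (pat_swap a b p) (proc_swap a b P)"

inductive scong :: "proc \<Rightarrow> proc \<Rightarrow> bool" (infix "\<equiv>\<^sub>s" 50) where
  s_refl: "P \<equiv>\<^sub>s P"
| s_sym: "P \<equiv>\<^sub>s Q \<Longrightarrow> Q \<equiv>\<^sub>s P"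
| s_trans: "P \<equiv>\<^sub>s Q \<Longrightarrow> Q \<equiv>\<^sub>s R \<Longrightarrow> P \<equiv>\<^sub>s R"
| s_par: "P \<equiv>\<^sub>s P' \<Longrightarrow> Q \<equiv>\<^sub>s Q' \<Longrightarrow> Par P Q \<equiv>\<^sub>s Par P' Q'"
| s_rep: "P \<equiv>\<^sub>s P' \<Longrightarrow> Rep P \<equiv>\<^sub>s Rep P'"
| s_new: "P \<equiv>\<^sub>s P' \<Longrightarrow> New n P \<equiv>\<^sub>s New n P'"
| s_case: "P \<equiv>\<^sub>s P' \<Longrightarrow> Case p P \<equiv>\<^sub>s Case p P'"
| s_alpha: "a \<notin> fnp P \<Longrightarrow> b \<notin> fnp P \<Longrightarrow> P \<equiv>\<^sub>s proc_swap a b P"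
| s_par_zero: "Par P Zero \<equiv>\<^sub>s P"
| s_par_comm: "Par P Q \<equiv>\<^sub>s Par Q P"
| s_par_assoc: "Par P (Par Q R) \<equiv>\<^sub>s Par (Par P Q) R"
| s_new_zero: "New n Zero \<equiv>\<^sub>s Zero"
| s_new_new: "New n (New m P) \<equiv>\<^sub>s New m (New n P)"
| s_rep_unf: "Rep P \<equiv>\<^sub>s Par P (Rep P)"
| s_extr: "n \<notin> fnp P \<Longrightarrow> Par P (New n Q) \<equiv>\<^sub>s New n (Par P Q)"

inductive red :: "proc \<Rightarrow> proc \<Rightarrow> bool" (infix "\<longmapsto>" 50) where
  r_comm: "unify p q = Some (\<sigma>, \<rho>) \<Longrightarrow>
             Par (Case p P) (Case q Q) \<longmapsto> Par (psub \<sigma> P) (psub \<rho> Q)"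
| r_par: "P \<longmapsto> P' \<Longrightarrow> Par P Q \<longmapsto> Par P' Q"
| r_new: "P \<longmapsto> P' \<Longrightarrow> New n P \<longmapsto> New n P'"
| r_struct: "P \<equiv>\<^sub>s P0 \<Longrightarrow> P0 \<longmapsto> Q0 \<Longrightarrow> Q0 \<equiv>\<^sub>s Q \<Longrightarrow> P \<longmapsto> Q"

fun news :: "name list \<Rightarrow> proc \<Rightarrow> proc" where
  "news [] P = P"
| "news (n # ns) P = New n (news ns P)"

definition barb :: "proc \<Rightarrow> name set \<Rightarrow> bool" where
  "barb P M \<longleftrightarrow> (\<exists>ns p P' P''. P \<equiv>\<^sub>s news ns (Par (Case p P') P'') \<and>
                      pn p \<inter> set ns = {} \<and> M = fn p - set ns)"

datatype ctx =
    Hole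
  | CParL ctx proc
  | CParR proc ctx
  | CRep ctx
  | CNew name ctx
  | CCase pat ctx

fun fill :: "ctx \<Rightarrow> proc \<Rightarrow> proc" where
  "fill Hole P = P"
| "fill (CParL C Q) P = Par (fill C P) Q"
| "fill (CParR Q C) P = Par Q (fill C P)"
| "fill (CRep C) P = Rep (fill C P)"
| "fill (CNew n C) P = New n (fill C P)"
| "fill (CCase p C) P = Case p (fill C P)"

fun wf_ctx :: "ctx \<Rightarrow> bool" where
  "wf_ctx Hole = True"
| "wf_ctx (CParL C Q) = (wf_ctx C \<and> wf_proc Q)"
| "wf_ctx (CParR Q C) = (wf_proc Q \<and> wf_ctx C)"
| "wf_ctx (CRep C) = wf_ctx C"
| "wf_ctx (CNew n C) = wf_ctx C"
| "wf_ctx (CCase p C) = (wf_pat p \<and> wf_ctx C)"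

definition on_procs :: "(proc \<Rightarrow> proc \<Rightarrow> bool) \<Rightarrow> bool" where
  "on_procs R \<longleftrightarrow> (\<forall>P Q. R P Q \<longrightarrow> wf_proc P \<and> wf_proc Q)"

definition barb_preserving :: "(proc \<Rightarrow> proc \<Rightarrow> bool) \<Rightarrow> bool" where
  "barb_preserving R \<longleftrightarrow> (\<forall>P Q M. R P Q \<longrightarrow> barb P M \<longrightarrow> barb Q M)"

definition reduction_closed :: "(proc \<Rightarrow> proc \<Rightarrow> bool) \<Rightarrow> bool" where
  "reduction_closed R \<longleftrightarrow> (\<forall>P Q P'. R P Q \<longrightarrow> P \<longmapsto> P' \<longrightarrow> (\<exists>Q'. Q \<longmapsto> Q' \<and> R P' Q'))"

definition context_closed :: "(proc \<Rightarrow> proc \<Rightarrow> bool) \<Rightarrow> bool" where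
  "context_closed R \<longleftrightarrow> (\<forall>P Q C. R P Q \<longrightarrow> wf_ctx C \<longrightarrow> R (fill C P) (fill C Q))"

text \<open>Barbed congruence: the largest (= union of all) symmetric, barb preserving,
  reduction closed and context closed relation on processes.\<close>
definition barbed_cong :: "proc \<Rightarrow> proc \<Rightarrow> bool" (infix "\<simeq>" 50) where
  "P \<simeq> Q \<longleftrightarrow> (\<exists>R. on_procs R \<and> symp R \<and> barb_preserving R \<and>
                    reduction_closed R \<and> context_closed R \<and> R P Q)"

end

theory Submission
  imports Defs "HOL-Library.Multiset"
begin

text \<open>A substitution is implemented by a context: if \<open>p\<close> is a pattern binding the names of
  \<open>dom \<sigma>\<close> and \<open>q\<close> the tuple of their images, then \<open>C = (p \<rightarrow> [\<cdot>]) | (q \<rightarrow> 0)\<close> reduces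
  to \<open>\<sigma>P | 0\<close>, and up to structural congruence this is its only reduct. Since barbed congruence
  is closed under contexts and reductions, \<open>C[P] \<simeq> C[Q]\<close> then forces \<open>\<sigma>P \<simeq> \<sigma>Q\<close>.

  The work lies in the word "only": reductions are closed under structural congruence, so one
  has to follow the top-level guards of a process through alpha-conversion and rewriting of
  their bodies. This needs that capture-avoiding substitution commutes with renamings and
  preserves structural congruence, and that unification sees only the shape of patterns.\<close>

lemma bn_simps [simp]:
  "bn (PBind x) = {x}" "bn (PVar x) = {}" "bn (PProt x) = {}" "bn (PComp p q) = bn p \<union> bn q"
  by (auto simp: bn_def)

lemma fn_simps [simp]:
  "fn (PBind x) = {}" "fn (PVar x) = {x}" "fn (PProt x) = {x}" "fn (PComp p q) = fn p \<union> fn q"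
  by (auto simp: fn_def)

lemma finite_vn [simp]: "finite (vn p)"
  by (induction p) auto

lemma finite_pn [simp]: "finite (pn p)"
  by (induction p) auto

lemma finite_fn [simp]: "finite (fn p)"
  by (simp add: fn_def)

lemma finite_fnp [simp]: "finite (fnp P)"
  by (induction P) auto

lemma finite_rnames: "is_subst \<sigma> \<Longrightarrow> finite (rnames \<sigma>)"
  unfolding rnames_def is_subst_def by (auto simp: bn_def intro!: finite_ran)

lemma finite_dom_subst: "is_subst \<sigma> \<Longrightarrow> finite (dom \<sigma>)"
  by (simp add: is_subst_def)

lemma fresh_notin: "finite X \<Longrightarrow> fresh X \<notin> X"
  unfolding fresh_def by (metis LeastI_ex ex_new_if_finite infinite_UNIV_nat)

lemma fresh_list_spec:
  assumes "finite X"
  shows "length (fresh_list n X) = n" "distinct (fresh_list n X)" "set (fresh_list n X) \<inter> X = {}"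
proof -
  have "length (fresh_list n X) = n \<and> distinct (fresh_list n X) \<and> set (fresh_list n X) \<inter> X = {}"
    using assms
  proof (induction n arbitrary: X)
    case (Suc n)
    then have "finite (insert (fresh X) X)" by simp
    with Suc.IH[OF this] fresh_notin[OF Suc.prems] show ?case by auto
  qed simp
  then show "length (fresh_list n X) = n" "distinct (fresh_list n X)"
    "set (fresh_list n X) \<inter> X = {}" by auto
qed

lemma communicable_simps [simp]:
  "communicable (PVar x)" "\<not> communicable (PBind x)" "\<not> communicable (PProt x)"
  "communicable (PComp p q) \<longleftrightarrow> communicable p \<and> communicable q"
  by (auto simp: communicable_def)

lemma communicable_bnl: "communicable q \<Longrightarrow> bnl q = []"
  by (simp add: communicable_def bn_def)

lemma wf_pat_distinct: "wf_pat p \<Longrightarrow> distinct (bnl p)"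
  by (simp add: wf_pat_def)

fun pat_ren :: "(name \<Rightarrow> name) \<Rightarrow> pat \<Rightarrow> pat" where
  "pat_ren f (PBind x) = PBind (f x)"
| "pat_ren f (PVar x) = PVar (f x)"
| "pat_ren f (PProt x) = PProt (f x)"
| "pat_ren f (PComp p q) = PComp (pat_ren f p) (pat_ren f q)"

fun proc_ren :: "(name \<Rightarrow> name) \<Rightarrow> proc \<Rightarrow> proc" where
  "proc_ren f Zero = Zero"
| "proc_ren f (Par P Q) = Par (proc_ren f P) (proc_ren f Q)"
| "proc_ren f (Rep P) = Rep (proc_ren f P)"
| "proc_ren f (New x P) = New (f x) (proc_ren f P)"
| "proc_ren f (Case p P) = Case (pat_ren f p) (proc_ren f P)"

lemma pat_swap_eq_ren: "pat_swap a b p = pat_ren (swapn a b) p"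
  by (induction p) auto

lemma proc_swap_eq_ren: "proc_swap a b P = proc_ren (swapn a b) P"
  by (induction P) (auto simp: pat_swap_eq_ren)

lemma swapn_swapn [simp]: "swapn a b (swapn a b x) = x"
  by (auto simp: swapn_def)

lemma swapn_simps [simp]:
  "swapn a b a = b" "swapn a b b = a" "x \<noteq> a \<Longrightarrow> x \<noteq> b \<Longrightarrow> swapn a b x = x"
  by (auto simp: swapn_def)

lemma inj_swapn [simp]: "inj (swapn a b)"
  by (metis injI swapn_swapn)

lemma pat_ren_comp: "pat_ren f (pat_ren g p) = pat_ren (f \<circ> g) p"
  by (induction p) auto

lemma proc_ren_comp: "proc_ren f (proc_ren g P) = proc_ren (f \<circ> g) P"
  by (induction P) (auto simp: pat_ren_comp comp_def)

lemma pat_ren_ident [simp]: "pat_ren (\<lambda>x. x) p = p"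
  by (induction p) auto

lemma proc_ren_ident [simp]: "proc_ren (\<lambda>x. x) P = P"
  by (induction P) auto

lemma pat_ren_id [simp]: "pat_ren id p = p"
  by (simp add: id_def)

lemma proc_ren_id [simp]: "proc_ren id P = P"
  by (simp add: id_def)

lemma pat_ren_fixed: "(\<And>n. n \<in> vn q \<union> pn q \<union> bn q \<Longrightarrow> h n = n) \<Longrightarrow> pat_ren h q = q"
  by (induction q) auto

lemma bnl_pat_ren [simp]: "bnl (pat_ren f p) = map f (bnl p)"
  by (induction p) auto

lemma bn_pat_ren [simp]: "bn (pat_ren f p) = f ` bn p"
  by (simp add: bn_def)

lemma vn_pat_ren [simp]: "vn (pat_ren f p) = f ` vn p"
  by (induction p) auto

lemma pn_pat_ren [simp]: "pn (pat_ren f p) = f ` pn p"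
  by (induction p) auto

lemma fn_pat_ren [simp]: "fn (pat_ren f p) = f ` fn p"
  by (auto simp: fn_def)

lemma fnp_proc_ren: "inj f \<Longrightarrow> fnp (proc_ren f P) = f ` fnp P"
  by (induction P) (auto simp: image_Un image_set_diff)

lemma wf_pat_ren: "inj f \<Longrightarrow> wf_pat p \<Longrightarrow> wf_pat (pat_ren f p)"
  unfolding wf_pat_def
  by (auto simp: distinct_map inj_on_def fn_def[symmetric] inj_image_mem_iff)

lemma wf_proc_ren: "inj f \<Longrightarrow> wf_proc P \<Longrightarrow> wf_proc (proc_ren f P)"
  by (induction P) (auto simp: wf_pat_ren)

lemma protect_ren: "pat_ren f (protect q) = protect (pat_ren f q)"
  by (induction q rule: protect.induct) auto

lemma fnp_swap_fresh: "a \<notin> fnp P \<Longrightarrow> b \<notin> fnp P \<Longrightarrow> fnp (proc_ren (swapn a b) P) = fnp P"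
proof -
  assume "a \<notin> fnp P" "b \<notin> fnp P"
  then have "swapn a b ` fnp P = id ` fnp P" by (intro image_cong) (auto simp: swapn_def)
  then show ?thesis by (simp add: fnp_proc_ren)
qed

fun swap_seq :: "(name \<times> name) list \<Rightarrow> name \<Rightarrow> name" where
  "swap_seq [] = id"
| "swap_seq ((a, b) # L) = swapn a b \<circ> swap_seq L"

lemma inj_swap_seq [simp]: "inj (swap_seq L)"
proof (induction L rule: swap_seq.induct)
  case (2 a b L)
  then show ?case by (simp only: swap_seq.simps) (rule inj_compose[OF inj_swapn 2])
qed simp

lemma swap_seq_fixed: "\<forall>(a, b)\<in>set L. a \<notin> S \<and> b \<notin> S \<Longrightarrow> x \<in> S \<Longrightarrow> swap_seq L x = x"
  by (induction L rule: swap_seq.induct) (auto simp: swapn_def)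

lemma swap_seq_notin: "\<forall>(a, b)\<in>set L. a \<notin> S \<and> b \<notin> S \<Longrightarrow> x \<notin> S \<Longrightarrow> swap_seq L x \<notin> S"
  by (metis injD inj_swap_seq swap_seq_fixed)

lemma swap_seq_map_avoiding:
  assumes "length us = length us'" "distinct us" "distinct us'" "set us \<inter> S = {}" "set us' \<inter> S = {}"
  obtains L where "\<forall>(a, b)\<in>set L. a \<notin> S \<and> b \<notin> S" "map (swap_seq L) us = us'"
proof -
  from assms have "\<exists>L. (\<forall>(a, b)\<in>set L. a \<notin> S \<and> b \<notin> S) \<and> map (swap_seq L) us = us'"
  proof (induction us arbitrary: us')
    case (Cons u us)
    then obtain u' us1 where us': "us' = u' # us1" by (cases us') auto
    with Cons obtain L where L: "\<forall>(a, b)\<in>set L. a \<notin> S \<and> b \<notin> S" "map (swap_seq L) us = us1"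
      by auto
    have u: "u \<notin> S" "u' \<notin> S" using Cons.prems us' by auto
    have "swapn (swap_seq L u) u' v = v" if "v \<in> set us1" for v
    proof -
      obtain w where w: "w \<in> set us" "v = swap_seq L w" using \<open>v \<in> set us1\<close> L(2) by auto
      then have "w \<noteq> u" using Cons.prems by auto
      then have "v \<noteq> swap_seq L u" using w by (metis injD inj_swap_seq)
      moreover have "v \<noteq> u'" using that Cons.prems us' by auto
      ultimately show ?thesis by simp
    qed
    then have "map (swap_seq ((swap_seq L u, u') # L)) us = us1"
      using L(2) by (auto intro!: map_idI)
    moreover have "swap_seq L u \<notin> S" using swap_seq_notin[OF L(1) u(1)] .
    ultimately show ?case using L u us' by (intro exI[of _ "(swap_seq L u, u') # L"]) auto
  qed (auto intro: exI[of _ "[]"])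
  with that show thesis by blast
qed

declare s_trans [trans]

lemma scong_fnp: "P \<equiv>\<^sub>s Q \<Longrightarrow> fnp P = fnp Q"
  by (induction rule: scong.induct) (auto simp: proc_swap_eq_ren fnp_swap_fresh)

lemma wf_proc_swap_iff: "wf_proc (proc_ren (swapn a b) P) \<longleftrightarrow> wf_proc P"
proof
  have "proc_ren (swapn a b) (proc_ren (swapn a b) P) = P"
    by (simp add: proc_ren_comp comp_def flip: id_def)
  then show "wf_proc (proc_ren (swapn a b) P) \<Longrightarrow> wf_proc P"
    by (metis inj_swapn wf_proc_ren)
qed (rule wf_proc_ren[OF inj_swapn])

lemma scong_wf: "P \<equiv>\<^sub>s Q \<Longrightarrow> wf_proc P \<longleftrightarrow> wf_proc Q"
  by (induction rule: scong.induct) (auto simp: proc_swap_eq_ren wf_proc_swap_iff)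

lemma scong_swap_seq: "\<forall>(a, b)\<in>set L. a \<notin> fnp X \<and> b \<notin> fnp X \<Longrightarrow> X \<equiv>\<^sub>s proc_ren (swap_seq L) X"
proof (induction L rule: swap_seq.induct)
  case 1
  then show ?case by (simp add: s_refl)
next
  case (2 a b L)
  let ?Y = "proc_ren (swap_seq L) X"
  have XY: "X \<equiv>\<^sub>s ?Y" using 2 by auto
  also have "?Y \<equiv>\<^sub>s proc_swap a b ?Y"
    using 2 scong_fnp[OF XY] by (intro s_alpha) auto
  finally show ?case by (simp add: proc_swap_eq_ren proc_ren_comp comp_def)
qed

lemma scong_New_vacuous: "n \<notin> fnp X \<Longrightarrow> New n X \<equiv>\<^sub>s X"
proof -
  assume n: "n \<notin> fnp X"
  have "New n X \<equiv>\<^sub>s New n (Par X Zero)" by (intro s_new s_sym[OF s_par_zero])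
  also have "\<dots> \<equiv>\<^sub>s Par X (New n Zero)" using n by (intro s_sym[OF s_extr])
  also have "\<dots> \<equiv>\<^sub>s Par X Zero" by (intro s_par s_refl s_new_zero)
  also have "\<dots> \<equiv>\<^sub>s X" by (rule s_par_zero)
  finally show ?thesis .
qed

definition subst_names :: "subst \<Rightarrow> name set \<Rightarrow> name set" where
  "subst_names \<sigma> A = (\<Union>z\<in>A. case \<sigma> z of None \<Rightarrow> {} | Some v \<Rightarrow> vn v \<union> pn v)"

lemma subst_names_mono: "A \<subseteq> B \<Longrightarrow> subst_names \<sigma> A \<subseteq> subst_names \<sigma> B"
  unfolding subst_names_def by auto

lemma subst_names_Un: "subst_names \<sigma> (A \<union> B) = subst_names \<sigma> A \<union> subst_names \<sigma> B"
  unfolding subst_names_def by auto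

lemma subst_names_subset_rnames: "subst_names \<sigma> A \<subseteq> rnames \<sigma>"
  unfolding subst_names_def rnames_def by (auto split: option.splits; meson ranI)

lemma subst_names_map_add: "subst_names (\<sigma> ++ \<rho>) A \<subseteq> subst_names \<sigma> A \<union> subst_names \<rho> A"
  unfolding subst_names_def by (auto simp: map_add_def split: option.splits)

lemma subst_names_upd_var: "subst_names (\<sigma>(x \<mapsto> PVar y)) A \<subseteq> {y} \<union> subst_names \<sigma> (A - {x})"
  unfolding subst_names_def by (auto split: option.splits if_splits)

lemma map_of_zip_nth:
  "length xs = length ys \<Longrightarrow> distinct xs \<Longrightarrow> i < length xs \<Longrightarrow> map_of (zip xs ys) (xs ! i) = Some (ys ! i)"
proof (induction xs ys arbitrary: i rule: list_induct2)
  case (Cons x xs y ys)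
  then show ?case by (cases i) (auto simp: nth_mem)
qed simp

lemma bind_vars_nth:
  "length xs = length ys \<Longrightarrow> distinct xs \<Longrightarrow> i < length xs \<Longrightarrow>
   (\<sigma> ++ map_of (zip xs (map PVar ys))) (xs ! i) = Some (PVar (ys ! i))"
  using map_of_zip_nth[of xs "map PVar ys" i] by (simp add: map_add_Some_iff)

lemma bind_vars_notin:
  "length xs = length ys \<Longrightarrow> z \<notin> set xs \<Longrightarrow> (\<sigma> ++ map_of (zip xs (map PVar ys))) z = \<sigma> z"
  by (simp add: map_add_dom_app_simps(3))

lemma subst_names_bind_vars:
  assumes "length xs = length ys"
  shows "subst_names (\<sigma> ++ map_of (zip xs (map PVar ys))) A \<subseteq> set ys \<union> subst_names \<sigma> (A - set xs)"
proof
  fix n assume "n \<in> subst_names (\<sigma> ++ map_of (zip xs (map PVar ys))) A"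
  then obtain z where "z \<in> A"
    "n \<in> (case (\<sigma> ++ map_of (zip xs (map PVar ys))) z of None \<Rightarrow> {} | Some v \<Rightarrow> vn v \<union> pn v)"
    unfolding subst_names_def by blast
  then obtain v where z: "z \<in> A" "(\<sigma> ++ map_of (zip xs (map PVar ys))) z = Some v" "n \<in> vn v \<union> pn v"
    by (cases "(\<sigma> ++ map_of (zip xs (map PVar ys))) z") auto
  show "n \<in> set ys \<union> subst_names \<sigma> (A - set xs)"
  proof (cases "z \<in> set xs")
    case True
    then have "map_of (zip xs (map PVar ys)) z = Some v"
      using z(2) assms by (simp add: map_add_dom_app_simps(1))
    then have "v \<in> PVar ` set ys" by (metis map_of_SomeD set_map set_zip_rightD)
    with z show ?thesis by auto
  next
    case False
    then have "\<sigma> z = Some v" using z(2) bind_vars_notin[OF assms False] by simp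
    with z False show ?thesis unfolding subst_names_def by (auto intro!: bexI[of _ z])
  qed
qed

lemma is_subst_communicable: "is_subst \<sigma> \<Longrightarrow> \<sigma> z = Some v \<Longrightarrow> communicable v"
  unfolding is_subst_def by (auto intro: ranI)

lemma is_subst_upd: "is_subst \<sigma> \<Longrightarrow> communicable v \<Longrightarrow> is_subst (\<sigma>(x \<mapsto> v))"
  unfolding is_subst_def by (auto simp: ran_def)

lemma is_subst_map_add: "is_subst \<sigma> \<Longrightarrow> is_subst \<rho> \<Longrightarrow> is_subst (\<sigma> ++ \<rho>)"
  unfolding is_subst_def by (auto simp: ran_def map_add_Some_iff)

lemma is_subst_map_of_zip:
  "length xs = length vs \<Longrightarrow> \<forall>v\<in>set vs. communicable v \<Longrightarrow> is_subst (map_of (zip xs vs))"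
  unfolding is_subst_def
  by (auto simp: ran_def finite_dom_map_of dest!: map_of_SomeD set_zip_rightD)

lemma is_subst_bind_vars:
  "is_subst \<sigma> \<Longrightarrow> length xs = length ys \<Longrightarrow> is_subst (\<sigma> ++ map_of (zip xs (map PVar ys)))"
  by (intro is_subst_map_add is_subst_map_of_zip) auto

lemma vn_protect: "vn (protect q) = {}"
  by (induction q rule: protect.induct) auto

lemma pn_protect: "pn (protect q) = vn q \<union> pn q"
  by (induction q rule: protect.induct) auto

lemma bnl_protect: "bnl (protect q) = bnl q"
  by (induction q rule: protect.induct) auto

lemma bnl_patsub: "is_subst \<sigma> \<Longrightarrow> bnl (patsub \<sigma> p) = bnl p"
  by (induction p)
    (auto split: option.splits simp: bnl_protect dest: is_subst_communicable communicable_bnl)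

lemma fn_patsub_subset: "fn (patsub \<sigma> p) \<subseteq> (fn p - dom \<sigma>) \<union> subst_names \<sigma> (fn p)"
  unfolding fn_def
  by (induction p) (auto split: option.splits simp: vn_protect pn_protect subst_names_def fn_def)

definition ren_lookup :: "(name \<rightharpoonup> name) \<Rightarrow> name \<Rightarrow> name" where
  "ren_lookup r x = (case r x of Some y \<Rightarrow> y | None \<Rightarrow> x)"

lemma bnl_rename_bn: "bnl (rename_bn r p) = map (ren_lookup r) (bnl p)"
  by (induction p) (auto simp: ren_lookup_def)

lemma fn_rename_bn [simp]: "fn (rename_bn r p) = fn p"
  by (induction p) auto

lemma rename_bn_no_binders: "bnl q = [] \<Longrightarrow> rename_bn r q = q"
  by (induction q) auto

lemma ren_lookup_zip_nth:
  "length xs = length ys \<Longrightarrow> distinct xs \<Longrightarrow> i < length xs \<Longrightarrow> ren_lookup (map_of (zip xs ys)) (xs ! i) = ys ! i"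
  by (simp add: ren_lookup_def map_of_zip_nth)

lemma ren_lookup_zip_map:
  assumes "length ys = length xs" "length ys' = length xs" "distinct xs" "distinct (map f xs)"
    "map h ys = ys'" "x \<in> set xs"
  shows "h (ren_lookup (map_of (zip xs ys)) x) = ren_lookup (map_of (zip (map f xs) ys')) (f x)"
proof -
  obtain i where "i < length xs" "x = xs ! i" using assms(6) by (auto simp: in_set_conv_nth)
  then show ?thesis
    using ren_lookup_zip_nth[of xs ys i] ren_lookup_zip_nth[of "map f xs" ys' i] assms(1-5)
    by (metis length_map nth_map)
qed

lemma bnl_rename_patsub:
  assumes "is_subst \<sigma>" "distinct (bnl p)" "length ys = length (bnl p)"
  shows "bnl (rename_bn (map_of (zip (bnl p) ys)) (patsub \<sigma> p)) = ys"
  using assms by (auto simp: bnl_rename_bn bnl_patsub ren_lookup_zip_nth intro: nth_equalityI)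

lemma psub_New_fresh:
  assumes "is_subst \<sigma>"
  obtains y where "y \<notin> fnp (New x P) \<union> dom \<sigma> \<union> rnames \<sigma>"
    "psub \<sigma> (New x P) = New y (psub (\<sigma>(x \<mapsto> PVar y)) P)"
proof (rule that)
  show "fresh (fnp (New x P) \<union> dom \<sigma> \<union> rnames \<sigma>) \<notin> fnp (New x P) \<union> dom \<sigma> \<union> rnames \<sigma>"
    using assms by (intro fresh_notin) (simp add: finite_rnames finite_dom_subst)
qed (simp add: Let_def)

lemma psub_Case_fresh:
  assumes "is_subst \<sigma>"
  obtains ys where "length ys = length (bnl p)" "distinct ys"
    "set ys \<inter> (fnp (Case p P) \<union> dom \<sigma> \<union> rnames \<sigma>) = {}"
    "psub \<sigma> (Case p P) = Case (rename_bn (map_of (zip (bnl p) ys)) (patsub \<sigma> p))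
       (psub (\<sigma> ++ map_of (zip (bnl p) (map PVar ys))) P)"
proof -
  have "finite (fnp (Case p P) \<union> dom \<sigma> \<union> rnames \<sigma>)"
    using assms by (simp add: finite_rnames finite_dom_subst)
  from fresh_list_spec[OF this, of "length (bnl p)"] that show thesis by (simp add: Let_def)
qed

lemma fnp_psub_subset:
  "wf_proc P \<Longrightarrow> is_subst \<sigma> \<Longrightarrow> fnp (psub \<sigma> P) \<subseteq> (fnp P - dom \<sigma>) \<union> subst_names \<sigma> (fnp P)"
proof (induction P arbitrary: \<sigma>)
  case (Par P1 P2)
  then have "fnp (psub \<sigma> P1) \<subseteq> (fnp P1 - dom \<sigma>) \<union> subst_names \<sigma> (fnp P1)"
    "fnp (psub \<sigma> P2) \<subseteq> (fnp P2 - dom \<sigma>) \<union> subst_names \<sigma> (fnp P2)" by auto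
  then show ?case by (auto simp: subst_names_Un)
next
  case (New x P)
  obtain y where y: "psub \<sigma> (New x P) = New y (psub (\<sigma>(x \<mapsto> PVar y)) P)"
    using psub_New_fresh[OF New.prems(2)] by metis
  have "fnp (psub (\<sigma>(x \<mapsto> PVar y)) P)
      \<subseteq> (fnp P - dom (\<sigma>(x \<mapsto> PVar y))) \<union> subst_names (\<sigma>(x \<mapsto> PVar y)) (fnp P)"
    using New.prems by (intro New.IH is_subst_upd) simp_all
  moreover note subst_names_upd_var[of \<sigma> x y "fnp P"]
  ultimately show ?case using y by auto
next
  case (Case p P)
  let ?xs = "bnl p"
  obtain ys where ys: "length ys = length ?xs" "distinct ys"
    and eq: "psub \<sigma> (Case p P) = Case (rename_bn (map_of (zip ?xs ys)) (patsub \<sigma> p))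
       (psub (\<sigma> ++ map_of (zip ?xs (map PVar ys))) P)"
    using psub_Case_fresh[OF Case.prems(2)] by metis
  let ?\<sigma>1 = "\<sigma> ++ map_of (zip ?xs (map PVar ys))"
  have "fnp (psub ?\<sigma>1 P) \<subseteq> (fnp P - dom ?\<sigma>1) \<union> subst_names ?\<sigma>1 (fnp P)"
    using Case.prems ys by (intro Case.IH is_subst_bind_vars) simp_all
  moreover have "subst_names ?\<sigma>1 (fnp P) \<subseteq> set ys \<union> subst_names \<sigma> (fnp P - set ?xs)"
    using ys by (intro subst_names_bind_vars) simp
  moreover have "dom ?\<sigma>1 = dom \<sigma> \<union> set ?xs" using ys by (auto simp: dom_map_add)
  ultimately have body: "fnp (psub ?\<sigma>1 P) - set ys \<subseteq> (fnp P - bn p - dom \<sigma>) \<union> subst_names \<sigma> (fnp P - bn p)"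
    by (auto simp: bn_def)
  have "bnl (rename_bn (map_of (zip ?xs ys)) (patsub \<sigma> p)) = ys"
    using Case.prems ys by (intro bnl_rename_patsub) (auto simp: wf_pat_distinct)
  with body fn_patsub_subset[of \<sigma> p]
  have "fnp (psub \<sigma> (Case p P)) \<subseteq> (fn p - dom \<sigma>) \<union> subst_names \<sigma> (fn p)
      \<union> (fnp P - bn p - dom \<sigma>) \<union> subst_names \<sigma> (fnp P - bn p)"
    unfolding eq by (auto simp: bn_def)
  then show ?case
    using subst_names_mono[of "fn p" "fnp (Case p P)" \<sigma>]
      subst_names_mono[of "fnp P - bn p" "fnp (Case p P)" \<sigma>]
    by auto
qed auto

lemma wf_psub: "wf_proc P \<Longrightarrow> is_subst \<sigma> \<Longrightarrow> wf_proc (psub \<sigma> P)"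
proof (induction P arbitrary: \<sigma>)
  case (New x P)
  obtain y where "psub \<sigma> (New x P) = New y (psub (\<sigma>(x \<mapsto> PVar y)) P)"
    using psub_New_fresh[OF New.prems(2)] by metis
  then show ?case using New by (simp add: is_subst_upd)
next
  case (Case p P)
  let ?xs = "bnl p"
  obtain ys where ys: "length ys = length ?xs" "distinct ys"
    "set ys \<inter> (fnp (Case p P) \<union> dom \<sigma> \<union> rnames \<sigma>) = {}"
    and eq: "psub \<sigma> (Case p P) = Case (rename_bn (map_of (zip ?xs ys)) (patsub \<sigma> p))
       (psub (\<sigma> ++ map_of (zip ?xs (map PVar ys))) P)"
    using psub_Case_fresh[OF Case.prems(2)] by metis
  let ?p' = "rename_bn (map_of (zip ?xs ys)) (patsub \<sigma> p)"
  have "bnl ?p' = ys"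
    using Case.prems ys by (intro bnl_rename_patsub) (auto simp: wf_pat_distinct)
  moreover have "fn ?p' \<subseteq> fnp (Case p P) \<union> dom \<sigma> \<union> rnames \<sigma>"
    using fn_patsub_subset[of \<sigma> p] subst_names_subset_rnames[of \<sigma> "fn p"] by auto
  ultimately have "wf_pat ?p'" using ys unfolding wf_pat_def bn_def by auto
  then show ?case
    unfolding eq using Case.IH[of "\<sigma> ++ map_of (zip ?xs (map PVar ys))"] Case.prems ys
    by (simp add: is_subst_bind_vars)
qed auto

section \<open>Substitution commutes with renaming\<close>

text \<open>\<open>g \<circ> \<sigma> = \<sigma>' \<circ> f\<close> on \<open>A\<close>, reading a substitution as the identity outside its domain.\<close>

definition subst_ren_commute ::
  "subst \<Rightarrow> subst \<Rightarrow> (name \<Rightarrow> name) \<Rightarrow> (name \<Rightarrow> name) \<Rightarrow> name set \<Rightarrow> bool" where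
  "subst_ren_commute \<sigma> \<sigma>' f g A \<longleftrightarrow>
     (\<forall>z\<in>A. \<sigma>' (f z) = map_option (pat_ren g) (\<sigma> z) \<and> (\<sigma> z = None \<longrightarrow> g z = f z))"

lemma subst_ren_commute_mono:
  "subst_ren_commute \<sigma> \<sigma>' f g A \<Longrightarrow> B \<subseteq> A \<Longrightarrow> subst_ren_commute \<sigma> \<sigma>' f g B"
  unfolding subst_ren_commute_def by blast

lemma subst_ren_commute_image:
  assumes "subst_ren_commute \<sigma> \<sigma>' f g A"
  shows "g ` ((A - dom \<sigma>) \<union> subst_names \<sigma> A) \<subseteq> f ` A \<union> rnames \<sigma>'"
proof
  fix m assume "m \<in> g ` ((A - dom \<sigma>) \<union> subst_names \<sigma> A)"
  then obtain n where n: "m = g n" "n \<in> (A - dom \<sigma>) \<union> subst_names \<sigma> A" by auto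
  show "m \<in> f ` A \<union> rnames \<sigma>'"
  proof (cases "n \<in> A - dom \<sigma>")
    case True
    then show ?thesis using assms n unfolding subst_ren_commute_def by auto
  next
    case False
    then obtain z v where z: "z \<in> A" "\<sigma> z = Some v" "n \<in> vn v \<union> pn v"
      using n unfolding subst_names_def by (auto split: option.splits)
    then have "\<sigma>' (f z) = Some (pat_ren g v)" using assms unfolding subst_ren_commute_def by auto
    then have "pat_ren g v \<in> ran \<sigma>'" by (rule ranI)
    moreover have "m \<in> vn (pat_ren g v) \<union> pn (pat_ren g v)" using z n by auto
    ultimately show ?thesis unfolding rnames_def by blast
  qed
qed

lemma subst_ren_commute_post:
  assumes c: "subst_ren_commute \<sigma> \<sigma>' f g A" and s: "is_subst \<sigma>"
    and \<tau>: "\<And>n. n \<in> g ` ((A - dom \<sigma>) \<union> subst_names \<sigma> A) \<Longrightarrow> \<tau> n = n"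
  shows "subst_ren_commute \<sigma> \<sigma>' f (\<tau> \<circ> g) A"
  unfolding subst_ren_commute_def
proof
  fix z assume z: "z \<in> A"
  show "\<sigma>' (f z) = map_option (pat_ren (\<tau> \<circ> g)) (\<sigma> z) \<and> (\<sigma> z = None \<longrightarrow> (\<tau> \<circ> g) z = f z)"
  proof (cases "\<sigma> z")
    case None
    then have "\<tau> (g z) = g z" using z by (intro \<tau>) auto
    then show ?thesis using c z None unfolding subst_ren_commute_def by auto
  next
    case (Some v)
    have "bn v = {}" using is_subst_communicable[OF s Some] by (simp add: communicable_def)
    moreover have "vn v \<union> pn v \<subseteq> subst_names \<sigma> A" using z Some unfolding subst_names_def by force
    ultimately have "pat_ren \<tau> (pat_ren g v) = pat_ren g v" using \<tau> by (intro pat_ren_fixed) auto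
    then show ?thesis using c z Some unfolding subst_ren_commute_def by (simp add: pat_ren_comp)
  qed
qed

lemma pat_ren_rename_patsub:
  assumes s: "is_subst \<sigma>" and c: "subst_ren_commute \<sigma> \<sigma>' f g (fn q)"
    and b: "\<forall>x\<in>set (bnl q). g (ren_lookup r x) = ren_lookup r' (f x)"
  shows "pat_ren g (rename_bn r (patsub \<sigma> q)) = rename_bn r' (patsub \<sigma>' (pat_ren f q))"
  using c b
proof (induction q)
  case (PBind x)
  then show ?case by (simp add: ren_lookup_def)
next
  case (PVar z)
  then show ?case
    using is_subst_communicable[OF s] communicable_bnl
    by (cases "\<sigma> z") (auto simp: subst_ren_commute_def rename_bn_no_binders)
next
  case (PProt z)
  then show ?case
    using is_subst_communicable[OF s] communicable_bnl
    by (cases "\<sigma> z") (auto simp: subst_ren_commute_def rename_bn_no_binders bnl_protect protect_ren)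
next
  case (PComp q1 q2)
  then show ?case by (auto intro: subst_ren_commute_mono)
qed

text \<open>The renaming on the left can be corrected by a permutation fixing the free names of
  \<open>\<sigma>P\<close>, so that the fresh names chosen on the two sides match up; by alpha-conversion this
  does not change the process.\<close>

lemma subst_ren_commute_realign:
  assumes c: "subst_ren_commute \<sigma> \<sigma>' f g A" and s: "is_subst \<sigma>" and g: "inj g"
    and ys: "distinct ys" "set ys \<inter> (A \<union> rnames \<sigma>) = {}"
    and ys': "distinct ys'" "length ys' = length ys" "set ys' \<inter> (f ` A \<union> rnames \<sigma>') = {}"
  obtains \<tau> where "subst_ren_commute \<sigma> \<sigma>' f (\<tau> \<circ> g) A" "inj (\<tau> \<circ> g)" "map (\<tau> \<circ> g) ys = ys'"
    "\<And>X. fnp X \<subseteq> g ` ((A - dom \<sigma>) \<union> subst_names \<sigma> A) \<Longrightarrow> X \<equiv>\<^sub>s proc_ren \<tau> X"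
proof -
  define S where "S = g ` ((A - dom \<sigma>) \<union> subst_names \<sigma> A)"
  have "(A - dom \<sigma>) \<union> subst_names \<sigma> A \<subseteq> A \<union> rnames \<sigma>"
    using subst_names_subset_rnames by blast
  then have "set ys \<inter> ((A - dom \<sigma>) \<union> subst_names \<sigma> A) = {}" using ys(2) by blast
  then have gys: "set (map g ys) \<inter> S = {}" by (simp add: S_def image_Int[OF g, symmetric])
  have ys'S: "set ys' \<inter> S = {}" using ys'(3) subst_ren_commute_image[OF c] unfolding S_def by blast
  have "distinct (map g ys)"
    using ys(1) inj_on_subset[OF g subset_UNIV] by (simp add: distinct_map)
  then obtain L where L: "\<forall>(a, b)\<in>set L. a \<notin> S \<and> b \<notin> S" "map (swap_seq L) (map g ys) = ys'"
    using swap_seq_map_avoiding[of "map g ys" ys' S] ys'(1,2) gys ys'S by auto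
  show thesis
  proof (rule that)
    show "subst_ren_commute \<sigma> \<sigma>' f (swap_seq L \<circ> g) A"
      using c s swap_seq_fixed[OF L(1)] by (intro subst_ren_commute_post) (auto simp: S_def)
    show "inj (swap_seq L \<circ> g)" using g inj_swap_seq by (rule inj_compose[rotated])
    show "map (swap_seq L \<circ> g) ys = ys'" using L(2) by simp
    show "X \<equiv>\<^sub>s proc_ren (swap_seq L) X" if "fnp X \<subseteq> g ` ((A - dom \<sigma>) \<union> subst_names \<sigma> A)" for X
      using L(1) that by (intro scong_swap_seq) (auto simp: S_def)
  qed
qed

lemma subst_ren_commute_bind_vars:
  assumes c: "subst_ren_commute \<sigma> \<sigma>' f g (A - set xs)" and f: "inj f" and xs: "distinct xs"
    and ys: "length ys = length xs" "map g ys = ys'"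
  shows "subst_ren_commute (\<sigma> ++ map_of (zip xs (map PVar ys)))
    (\<sigma>' ++ map_of (zip (map f xs) (map PVar ys'))) f g A"
  unfolding subst_ren_commute_def
proof
  fix z assume z: "z \<in> A"
  have l: "length (map f xs) = length ys'" "distinct (map f xs)"
    using ys xs inj_on_subset[OF f subset_UNIV] by (auto simp: distinct_map)
  show "(\<sigma>' ++ map_of (zip (map f xs) (map PVar ys'))) (f z)
      = map_option (pat_ren g) ((\<sigma> ++ map_of (zip xs (map PVar ys))) z)
    \<and> ((\<sigma> ++ map_of (zip xs (map PVar ys))) z = None \<longrightarrow> g z = f z)"
  proof (cases "z \<in> set xs")
    case True
    then obtain i where i: "i < length xs" "z = xs ! i" by (auto simp: in_set_conv_nth)
    have "(\<sigma> ++ map_of (zip xs (map PVar ys))) z = Some (PVar (ys ! i))"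
      using bind_vars_nth[of xs ys i] ys xs i by simp
    moreover have "(\<sigma>' ++ map_of (zip (map f xs) (map PVar ys'))) (f z) = Some (PVar (ys' ! i))"
      using bind_vars_nth[of "map f xs" ys' i] l i by simp
    moreover have "g (ys ! i) = ys' ! i" using ys i by auto
    ultimately show ?thesis by simp
  next
    case False
    then have "f z \<notin> set (map f xs)" using f by (auto simp: inj_image_mem_iff)
    then show ?thesis using c z False l(1) ys(1)
      by (simp add: bind_vars_notin subst_ren_commute_def)
  qed
qed

lemma proc_ren_psub_New:
  assumes IH: "\<And>\<sigma> \<sigma>' g. is_subst \<sigma> \<Longrightarrow> is_subst \<sigma>' \<Longrightarrow> inj g \<Longrightarrow>
      subst_ren_commute \<sigma> \<sigma>' f g (fnp P) \<Longrightarrow> proc_ren g (psub \<sigma> P) \<equiv>\<^sub>s psub \<sigma>' (proc_ren f P)"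
    and s: "is_subst \<sigma>" "is_subst \<sigma>'" and f: "inj f" and g: "inj g" and wf: "wf_proc P"
    and c: "subst_ren_commute \<sigma> \<sigma>' f g (fnp (New x P))"
  shows "proc_ren g (psub \<sigma> (New x P)) \<equiv>\<^sub>s psub \<sigma>' (proc_ren f (New x P))"
proof -
  let ?A = "fnp (New x P)"
  obtain y where y: "y \<notin> ?A \<union> dom \<sigma> \<union> rnames \<sigma>"
    and eq: "psub \<sigma> (New x P) = New y (psub (\<sigma>(x \<mapsto> PVar y)) P)"
    using psub_New_fresh[OF s(1)] by metis
  obtain y' where y': "y' \<notin> fnp (New (f x) (proc_ren f P)) \<union> dom \<sigma>' \<union> rnames \<sigma>'"
    and eq': "psub \<sigma>' (New (f x) (proc_ren f P)) = New y' (psub (\<sigma>'(f x \<mapsto> PVar y')) (proc_ren f P))"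
    using psub_New_fresh[OF s(2)] by metis
  have "fnp (New (f x) (proc_ren f P)) = f ` ?A" using f by (simp add: fnp_proc_ren image_set_diff)
  then have fresh: "set [y] \<inter> (?A \<union> rnames \<sigma>) = {}" "set [y'] \<inter> (f ` ?A \<union> rnames \<sigma>') = {}"
    using y y' by auto
  obtain \<tau> where c': "subst_ren_commute \<sigma> \<sigma>' f (\<tau> \<circ> g) ?A" and g': "inj (\<tau> \<circ> g)"
    and \<tau>y: "map (\<tau> \<circ> g) [y] = [y']"
    and alpha: "\<And>X. fnp X \<subseteq> g ` ((?A - dom \<sigma>) \<union> subst_names \<sigma> ?A) \<Longrightarrow> X \<equiv>\<^sub>s proc_ren \<tau> X"
    by (rule subst_ren_commute_realign[OF c s(1) g _ fresh(1) _ _ fresh(2)]) auto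
  have "subst_ren_commute (\<sigma>(x \<mapsto> PVar y)) (\<sigma>'(f x \<mapsto> PVar y')) f (\<tau> \<circ> g) (fnp P)"
    using subst_ren_commute_bind_vars[of \<sigma> \<sigma>' f "\<tau> \<circ> g" "fnp P" "[x]" "[y]" "[y']"] c' f \<tau>y
    by simp
  then have IH': "proc_ren (\<tau> \<circ> g) (psub (\<sigma>(x \<mapsto> PVar y)) P) \<equiv>\<^sub>s psub (\<sigma>'(f x \<mapsto> PVar y')) (proc_ren f P)"
    using s g' by (intro IH is_subst_upd) auto
  have "fnp (psub \<sigma> (New x P)) \<subseteq> (?A - dom \<sigma>) \<union> subst_names \<sigma> ?A"
    using wf s by (intro fnp_psub_subset) auto
  then have "proc_ren g (psub \<sigma> (New x P)) \<equiv>\<^sub>s proc_ren \<tau> (proc_ren g (psub \<sigma> (New x P)))"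
    using g by (intro alpha) (auto simp: fnp_proc_ren)
  also have "\<dots> = New y' (proc_ren (\<tau> \<circ> g) (psub (\<sigma>(x \<mapsto> PVar y)) P))"
    using \<tau>y unfolding eq by (simp add: proc_ren_comp)
  also have "\<dots> \<equiv>\<^sub>s New y' (psub (\<sigma>'(f x \<mapsto> PVar y')) (proc_ren f P))"
    using IH' by (rule s_new)
  also have "\<dots> = psub \<sigma>' (proc_ren f (New x P))" using eq' by simp
  finally show ?thesis .
qed

lemma proc_ren_psub_Case:
  assumes IH: "\<And>\<sigma> \<sigma>' g. is_subst \<sigma> \<Longrightarrow> is_subst \<sigma>' \<Longrightarrow> inj g \<Longrightarrow>
      subst_ren_commute \<sigma> \<sigma>' f g (fnp P) \<Longrightarrow> proc_ren g (psub \<sigma> P) \<equiv>\<^sub>s psub \<sigma>' (proc_ren f P)"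
    and s: "is_subst \<sigma>" "is_subst \<sigma>'" and f: "inj f" and g: "inj g" and wf: "wf_proc (Case p P)"
    and c: "subst_ren_commute \<sigma> \<sigma>' f g (fnp (Case p P))"
  shows "proc_ren g (psub \<sigma> (Case p P)) \<equiv>\<^sub>s psub \<sigma>' (proc_ren f (Case p P))"
proof -
  let ?A = "fnp (Case p P)" and ?xs = "bnl p" and ?xs' = "map f (bnl p)"
  obtain ys where ys: "length ys = length ?xs" "distinct ys" "set ys \<inter> (?A \<union> dom \<sigma> \<union> rnames \<sigma>) = {}"
    and eq: "psub \<sigma> (Case p P) = Case (rename_bn (map_of (zip ?xs ys)) (patsub \<sigma> p))
      (psub (\<sigma> ++ map_of (zip ?xs (map PVar ys))) P)"
    using psub_Case_fresh[OF s(1)] by metis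
  obtain ys' where ys': "length ys' = length ?xs" "distinct ys'"
    "set ys' \<inter> (fnp (Case (pat_ren f p) (proc_ren f P)) \<union> dom \<sigma>' \<union> rnames \<sigma>') = {}"
    and eq': "psub \<sigma>' (Case (pat_ren f p) (proc_ren f P))
      = Case (rename_bn (map_of (zip ?xs' ys')) (patsub \<sigma>' (pat_ren f p)))
          (psub (\<sigma>' ++ map_of (zip ?xs' (map PVar ys'))) (proc_ren f P))"
    using psub_Case_fresh[OF s(2), of "pat_ren f p" "proc_ren f P"] by auto
  have "fnp (Case (pat_ren f p) (proc_ren f P)) = f ` ?A"
    using f by (simp add: fnp_proc_ren image_Un image_set_diff)
  then have fresh: "set ys \<inter> (?A \<union> rnames \<sigma>) = {}" "set ys' \<inter> (f ` ?A \<union> rnames \<sigma>') = {}"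
    using ys(3) ys'(3) by auto
  obtain \<tau> where c': "subst_ren_commute \<sigma> \<sigma>' f (\<tau> \<circ> g) ?A" and g': "inj (\<tau> \<circ> g)"
    and \<tau>ys: "map (\<tau> \<circ> g) ys = ys'"
    and alpha: "\<And>X. fnp X \<subseteq> g ` ((?A - dom \<sigma>) \<union> subst_names \<sigma> ?A) \<Longrightarrow> X \<equiv>\<^sub>s proc_ren \<tau> X"
    by (rule subst_ren_commute_realign[OF c s(1) g ys(2) fresh(1) ys'(2) _ fresh(2)]) (use ys ys' in auto)
  have dxs: "distinct ?xs" "distinct ?xs'"
    using wf inj_on_subset[OF f subset_UNIV] by (auto simp: wf_pat_distinct distinct_map)
  have "\<forall>x\<in>set ?xs. (\<tau> \<circ> g) (ren_lookup (map_of (zip ?xs ys)) x) = ren_lookup (map_of (zip ?xs' ys')) (f x)"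
    using ren_lookup_zip_map[OF _ _ dxs \<tau>ys] ys ys' by simp
  then have pat: "pat_ren (\<tau> \<circ> g) (rename_bn (map_of (zip ?xs ys)) (patsub \<sigma> p))
      = rename_bn (map_of (zip ?xs' ys')) (patsub \<sigma>' (pat_ren f p))"
    using c' by (intro pat_ren_rename_patsub[OF s(1)] subst_ren_commute_mono[OF c']) auto
  have "subst_ren_commute (\<sigma> ++ map_of (zip ?xs (map PVar ys))) (\<sigma>' ++ map_of (zip ?xs' (map PVar ys')))
      f (\<tau> \<circ> g) (fnp P)"
    using f dxs ys \<tau>ys
    by (intro subst_ren_commute_bind_vars subst_ren_commute_mono[OF c']) (auto simp: bn_def)
  then have body: "proc_ren (\<tau> \<circ> g) (psub (\<sigma> ++ map_of (zip ?xs (map PVar ys))) P)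
      \<equiv>\<^sub>s psub (\<sigma>' ++ map_of (zip ?xs' (map PVar ys'))) (proc_ren f P)"
    using s g' ys ys' by (intro IH is_subst_bind_vars) auto
  have "fnp (psub \<sigma> (Case p P)) \<subseteq> (?A - dom \<sigma>) \<union> subst_names \<sigma> ?A"
    using wf s by (intro fnp_psub_subset)
  then have "proc_ren g (psub \<sigma> (Case p P)) \<equiv>\<^sub>s proc_ren \<tau> (proc_ren g (psub \<sigma> (Case p P)))"
    using g by (intro alpha) (auto simp: fnp_proc_ren)
  also have "\<dots> \<equiv>\<^sub>s Case (rename_bn (map_of (zip ?xs' ys')) (patsub \<sigma>' (pat_ren f p)))
      (psub (\<sigma>' ++ map_of (zip ?xs' (map PVar ys'))) (proc_ren f P))"
    unfolding eq using body pat by (simp add: proc_ren_comp pat_ren_comp s_case)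
  also have "\<dots> = psub \<sigma>' (proc_ren f (Case p P))" using eq' by simp
  finally show ?thesis .
qed

lemma proc_ren_psub:
  assumes "wf_proc P" "is_subst \<sigma>" "is_subst \<sigma>'" "inj f" "inj g" "subst_ren_commute \<sigma> \<sigma>' f g (fnp P)"
  shows "proc_ren g (psub \<sigma> P) \<equiv>\<^sub>s psub \<sigma>' (proc_ren f P)"
  using assms
proof (induction P arbitrary: \<sigma> \<sigma>' g)
  case Zero
  then show ?case by (simp add: s_refl)
next
  case (Par P1 P2)
  then show ?case by (auto intro!: s_par dest: subst_ren_commute_mono)
next
  case (Rep P)
  then show ?case by (auto intro!: s_rep)
next
  case (New x P)
  from New.prems show ?case by (intro proc_ren_psub_New[where P = P]) (auto intro: New.IH)
next
  case (Case p P)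
  from Case.prems show ?case by (intro proc_ren_psub_Case[where P = P]) (auto intro: Case.IH)
qed

lemma psub_cong:
  assumes "wf_proc P" "is_subst \<sigma>" "is_subst \<sigma>'" "\<And>z. z \<in> fnp P \<Longrightarrow> \<sigma> z = \<sigma>' z"
  shows "psub \<sigma> P \<equiv>\<^sub>s psub \<sigma>' P"
  using proc_ren_psub[of P \<sigma> \<sigma>' id id] assms
  by (simp add: subst_ren_commute_def option.map_ident_strong)

lemma psub_swap_fresh:
  assumes "wf_proc P" "is_subst \<sigma>" "a \<notin> fnp P" "b \<notin> fnp P"
  shows "psub \<sigma> P \<equiv>\<^sub>s psub \<sigma> (proc_swap a b P)"
proof -
  have "subst_ren_commute \<sigma> \<sigma> (swapn a b) id (fnp P)"
    using assms(3,4) unfolding subst_ren_commute_def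
    by (auto simp: swapn_def option.map_ident_strong)
  then show ?thesis using proc_ren_psub[of P \<sigma> \<sigma> "swapn a b" id] assms by (simp add: proc_swap_eq_ren)
qed

lemma subst_ren_commute_rename_bound:
  assumes s: "is_subst \<sigma>"
    and y: "y \<notin> fnp (New x P) \<union> dom \<sigma> \<union> rnames \<sigma>" and y0: "y0 \<notin> fnp (New x P) \<union> dom \<sigma> \<union> rnames \<sigma>"
  shows "subst_ren_commute (\<sigma>(x \<mapsto> PVar y0)) (\<sigma>(x \<mapsto> PVar y)) id (swapn y0 y) (fnp P)"
proof -
  let ?\<sigma>0 = "\<sigma>(x \<mapsto> PVar y0)" and ?\<sigma>1 = "\<sigma>(x \<mapsto> PVar y)"
  have fixed: "pat_ren (swapn y0 y) v = v" if "\<sigma> z = Some v" for z v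
  proof (rule pat_ren_fixed)
    fix n assume n: "n \<in> vn v \<union> pn v \<union> bn v"
    have "bn v = {}" using is_subst_communicable[OF s that] by (simp add: communicable_def)
    moreover have "vn v \<union> pn v \<subseteq> rnames \<sigma>" using that unfolding rnames_def by (auto intro: ranI)
    ultimately have "n \<in> rnames \<sigma>" using n by auto
    then show "swapn y0 y n = n" using y y0 by (intro swapn_simps(3)) auto
  qed
  show ?thesis
    unfolding subst_ren_commute_def
  proof (intro ballI conjI impI)
    fix z assume z: "z \<in> fnp P"
    show "?\<sigma>1 (id z) = map_option (pat_ren (swapn y0 y)) (?\<sigma>0 z)"
      using fixed[of z] by (cases "z = x"; cases "\<sigma> z") auto
    show "swapn y0 y z = id z" if "?\<sigma>0 z = None"
    proof -
      have "z \<in> fnp (New x P)" using that z by (auto split: if_splits)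
      then have "z \<noteq> y0" "z \<noteq> y" using y y0 by auto
      then show ?thesis by simp
    qed
  qed
qed

lemma psub_New_rename:
  assumes wf: "wf_proc P" and s: "is_subst \<sigma>" and y: "y \<notin> fnp (New x P) \<union> dom \<sigma> \<union> rnames \<sigma>"
  shows "psub \<sigma> (New x P) \<equiv>\<^sub>s New y (psub (\<sigma>(x \<mapsto> PVar y)) P)"
proof -
  obtain y0 where y0: "y0 \<notin> fnp (New x P) \<union> dom \<sigma> \<union> rnames \<sigma>"
    and eq: "psub \<sigma> (New x P) = New y0 (psub (\<sigma>(x \<mapsto> PVar y0)) P)"
    using psub_New_fresh[OF s] by metis
  let ?\<sigma>0 = "\<sigma>(x \<mapsto> PVar y0)" and ?\<sigma>1 = "\<sigma>(x \<mapsto> PVar y)"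
  from s y y0 have "subst_ren_commute ?\<sigma>0 ?\<sigma>1 id (swapn y0 y) (fnp P)"
    by (rule subst_ren_commute_rename_bound)
  then have ren: "proc_ren (swapn y0 y) (psub ?\<sigma>0 P) \<equiv>\<^sub>s psub ?\<sigma>1 P"
    using proc_ren_psub[of P ?\<sigma>0 ?\<sigma>1 id "swapn y0 y"] wf s by (simp add: is_subst_upd)
  have "fnp (psub ?\<sigma>0 P) \<subseteq> (fnp P - dom ?\<sigma>0) \<union> subst_names ?\<sigma>0 (fnp P)"
    using wf s by (intro fnp_psub_subset is_subst_upd) auto
  moreover have "subst_names ?\<sigma>0 (fnp P) \<subseteq> {y0} \<union> rnames \<sigma>"
    using subst_names_upd_var[of \<sigma> x y0 "fnp P"] subst_names_subset_rnames[of \<sigma> "fnp P - {x}"]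
    by blast
  ultimately have "y \<notin> fnp (New y0 (psub ?\<sigma>0 P))" using y by auto
  then have "New y0 (psub ?\<sigma>0 P) \<equiv>\<^sub>s proc_swap y0 y (New y0 (psub ?\<sigma>0 P))"
    by (intro s_alpha) auto
  also have "\<dots> = New y (proc_ren (swapn y0 y) (psub ?\<sigma>0 P))" by (simp add: proc_swap_eq_ren)
  also have "\<dots> \<equiv>\<^sub>s New y (psub ?\<sigma>1 P)" using ren by (rule s_new)
  finally have "New y0 (psub ?\<sigma>0 P) \<equiv>\<^sub>s New y (psub ?\<sigma>1 P)" .
  then show ?thesis unfolding eq .
qed

section \<open>Substitution preserves structural congruence\<close>

lemma psub_New_New:
  assumes wf: "wf_proc P" and s: "is_subst \<sigma>"
  shows "psub \<sigma> (New n (New m P)) \<equiv>\<^sub>s psub \<sigma> (New m (New n P))"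
proof (cases "n = m")
  case True
  then show ?thesis by (simp add: s_refl)
next
  case False
  define X where "X = fnp P \<union> {n, m} \<union> dom \<sigma> \<union> rnames \<sigma>"
  have "finite X" using s by (simp add: X_def finite_rnames finite_dom_subst)
  then obtain a b where ab: "a \<notin> X" "b \<notin> X" "a \<noteq> b"
    by (metis fresh_notin finite_insert insertCI)
  have sa: "is_subst (\<sigma>(n \<mapsto> PVar a))" and sb: "is_subst (\<sigma>(m \<mapsto> PVar b))"
    using s by (simp_all add: is_subst_upd)
  have ra: "rnames (\<sigma>(n \<mapsto> PVar a)) \<subseteq> rnames \<sigma> \<union> {a}"
    and rb: "rnames (\<sigma>(m \<mapsto> PVar b)) \<subseteq> rnames \<sigma> \<union> {b}"
    unfolding rnames_def by (auto simp: ran_def bn_def split: if_splits)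
  have "psub \<sigma> (New n (New m P)) \<equiv>\<^sub>s New a (psub (\<sigma>(n \<mapsto> PVar a)) (New m P))"
    using ab wf s by (intro psub_New_rename) (auto simp: X_def)
  also have "\<dots> \<equiv>\<^sub>s New a (New b (psub (\<sigma>(n \<mapsto> PVar a, m \<mapsto> PVar b)) P))"
    using ab ra wf sa by (intro s_new psub_New_rename) (auto simp: X_def)
  also have "\<dots> \<equiv>\<^sub>s New b (New a (psub (\<sigma>(n \<mapsto> PVar a, m \<mapsto> PVar b)) P))"
    by (rule s_new_new)
  also have "\<sigma>(n \<mapsto> PVar a, m \<mapsto> PVar b) = \<sigma>(m \<mapsto> PVar b, n \<mapsto> PVar a)"
    using False by (rule fun_upd_twist)
  also have "New b (New a (psub (\<sigma>(m \<mapsto> PVar b, n \<mapsto> PVar a)) P))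
      \<equiv>\<^sub>s New b (psub (\<sigma>(m \<mapsto> PVar b)) (New n P))"
    using ab rb wf sb by (intro s_new s_sym[OF psub_New_rename]) (auto simp: X_def)
  also have "\<dots> \<equiv>\<^sub>s psub \<sigma> (New m (New n P))"
    using ab wf s by (intro s_sym[OF psub_New_rename]) (auto simp: X_def)
  finally show ?thesis .
qed

lemma psub_scope_extrusion:
  assumes wf: "wf_proc P" "wf_proc Q" and s: "is_subst \<sigma>" and n: "n \<notin> fnp P"
  shows "psub \<sigma> (Par P (New n Q)) \<equiv>\<^sub>s psub \<sigma> (New n (Par P Q))"
proof -
  define X where "X = fnp P \<union> fnp Q \<union> {n} \<union> dom \<sigma> \<union> rnames \<sigma>"
  have "finite X" using s by (simp add: X_def finite_rnames finite_dom_subst)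
  then obtain a where a: "a \<notin> X" using fresh_notin by blast
  let ?\<sigma>1 = "\<sigma>(n \<mapsto> PVar a)"
  have s1: "is_subst ?\<sigma>1" using s by (simp add: is_subst_upd)
  have "a \<notin> fnp (psub \<sigma> P)"
    using a fnp_psub_subset[OF wf(1) s] subst_names_subset_rnames[of \<sigma> "fnp P"] by (auto simp: X_def)
  have "psub \<sigma> (New n Q) \<equiv>\<^sub>s New a (psub ?\<sigma>1 Q)"
    using a wf s by (intro psub_New_rename) (auto simp: X_def)
  then have "psub \<sigma> (Par P (New n Q)) \<equiv>\<^sub>s Par (psub \<sigma> P) (New a (psub ?\<sigma>1 Q))"
    by (simp only: psub.simps) (rule s_par[OF s_refl])
  also have "\<dots> \<equiv>\<^sub>s New a (Par (psub \<sigma> P) (psub ?\<sigma>1 Q))"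
    using \<open>a \<notin> fnp (psub \<sigma> P)\<close> by (rule s_extr)
  also have "\<dots> \<equiv>\<^sub>s New a (Par (psub ?\<sigma>1 P) (psub ?\<sigma>1 Q))"
    using n wf s s1 by (intro s_new s_par s_refl psub_cong) auto
  also have "\<dots> = New a (psub ?\<sigma>1 (Par P Q))" by simp
  also have "\<dots> \<equiv>\<^sub>s psub \<sigma> (New n (Par P Q))"
    using a wf s by (intro s_sym[OF psub_New_rename]) (auto simp: X_def)
  finally show ?thesis .
qed

lemma psub_scong: "P \<equiv>\<^sub>s Q \<Longrightarrow> wf_proc P \<Longrightarrow> is_subst \<sigma> \<Longrightarrow> psub \<sigma> P \<equiv>\<^sub>s psub \<sigma> Q"
proof (induction arbitrary: \<sigma> rule: scong.induct)
  case (s_sym P Q)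
  then show ?case by (metis scong.s_sym scong_wf)
next
  case (s_trans P Q R)
  then show ?case by (metis scong.s_trans scong_wf)
next
  case (s_new P P' n)
  from s_new.hyps have "fnp P = fnp P'" by (rule scong_fnp)
  then show ?case
    using s_new.prems
    by (simp only: psub.simps Let_def fnp.simps) (intro scong.s_new s_new.IH is_subst_upd; simp)
next
  case (s_case P P' p)
  from s_case.hyps have "fnp P = fnp P'" by (rule scong_fnp)
  then show ?case
    using s_case.prems
    by (simp only: psub.simps Let_def fnp.simps)
      (intro scong.s_case s_case.IH is_subst_bind_vars; simp add: fresh_list_spec finite_rnames finite_dom_subst)
next
  case (s_alpha a P b)
  then show ?case by (intro psub_swap_fresh) auto
next
  case (s_new_new n m P)
  then show ?case by (intro psub_New_New) auto
next
  case (s_extr n P Q)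
  then show ?case by (intro psub_scope_extrusion) auto
qed (auto simp: Let_def intro: scong.intros)

section \<open>Unification depends only on the shape of patterns\<close>

fun erase_bn :: "pat \<Rightarrow> pat" where
  "erase_bn (PBind x) = PBind 0"
| "erase_bn (PVar x) = PVar x"
| "erase_bn (PProt x) = PProt x"
| "erase_bn (PComp p q) = PComp (erase_bn p) (erase_bn q)"

lemma erase_bn_eqD:
  "erase_bn p = PBind n \<Longrightarrow> \<exists>x. p = PBind x"
  "erase_bn p = PVar n \<Longrightarrow> p = PVar n"
  "erase_bn p = PProt n \<Longrightarrow> p = PProt n"
  "erase_bn p = PComp a b \<Longrightarrow> \<exists>p1 p2. p = PComp p1 p2 \<and> erase_bn p1 = a \<and> erase_bn p2 = b"
  by (cases p; auto)+

lemma erase_bn_communicable: "communicable q \<Longrightarrow> erase_bn q' = erase_bn q \<Longrightarrow> q' = q"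
proof (induction q arbitrary: q')
  case (PComp a b)
  then obtain a' b' where "q' = PComp a' b'" "erase_bn a' = erase_bn a" "erase_bn b' = erase_bn b"
    using erase_bn_eqD(4) by (metis erase_bn.simps(4))
  with PComp show ?case by simp
qed (auto dest: erase_bn_eqD)

lemma length_bnl_erase_bn: "erase_bn p' = erase_bn p \<Longrightarrow> length (bnl p') = length (bnl p)"
proof -
  have "length (bnl (erase_bn p)) = length (bnl p)" for p by (induction p) auto
  then show "erase_bn p' = erase_bn p \<Longrightarrow> length (bnl p') = length (bnl p)" by metis
qed

lemma erase_bn_ren_fixed: "(\<And>x. x \<in> fn p \<Longrightarrow> h x = x) \<Longrightarrow> erase_bn (pat_ren h p) = erase_bn p"
  by (induction p) auto

lemma map_of_zip_append:
  assumes "length xs1 = length vs1" "set xs1 \<inter> set xs2 = {}"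
  shows "map_of (zip (xs1 @ xs2) (vs1 @ vs2)) = map_of (zip xs1 vs1) ++ map_of (zip xs2 vs2)"
proof -
  have "dom (map_of (zip xs2 vs2)) \<inter> dom (map_of (zip xs1 vs1)) = {}"
    using assms(2) unfolding dom_map_of_conv_image_fst by (auto dest!: set_zip_leftD)
  then show ?thesis using assms(1) by (simp add: map_of_append map_add_comm)
qed

definition unifier_transfers :: "pat \<Rightarrow> pat \<Rightarrow> pat \<Rightarrow> pat \<Rightarrow> subst \<Rightarrow> subst \<Rightarrow> bool" where
  "unifier_transfers p q p' q' \<sigma> \<rho> \<longleftrightarrow> (\<exists>vs ws.
     length vs = length (bnl p) \<and> length ws = length (bnl q) \<and>
     (\<forall>v\<in>set vs. communicable v) \<and> (\<forall>w\<in>set ws. communicable w) \<and>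
     \<sigma> = map_of (zip (bnl p) vs) \<and> \<rho> = map_of (zip (bnl q) ws) \<and>
     unify p' q' = Some (map_of (zip (bnl p') vs), map_of (zip (bnl q') ws)))"

lemma unifier_transfers_PComp:
  assumes t: "unifier_transfers p1 q1 p1' q1' s1 r1" "unifier_transfers p2 q2 p2' q2' s2 r2"
    and l: "length (bnl p1') = length (bnl p1)" "length (bnl q1') = length (bnl q1)"
    and d: "set (bnl p1) \<inter> set (bnl p2) = {}" "set (bnl q1) \<inter> set (bnl q2) = {}"
      "set (bnl p1') \<inter> set (bnl p2') = {}" "set (bnl q1') \<inter> set (bnl q2') = {}"
  shows "unifier_transfers (PComp p1 p2) (PComp q1 q2) (PComp p1' p2') (PComp q1' q2') (s1 ++ s2) (r1 ++ r2)"
proof -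
  obtain vs1 ws1 where w1: "length vs1 = length (bnl p1)" "length ws1 = length (bnl q1)"
    "\<forall>v\<in>set vs1. communicable v" "\<forall>w\<in>set ws1. communicable w"
    "s1 = map_of (zip (bnl p1) vs1)" "r1 = map_of (zip (bnl q1) ws1)"
    "unify p1' q1' = Some (map_of (zip (bnl p1') vs1), map_of (zip (bnl q1') ws1))"
    using t(1) unfolding unifier_transfers_def by blast
  obtain vs2 ws2 where w2: "length vs2 = length (bnl p2)" "length ws2 = length (bnl q2)"
    "\<forall>v\<in>set vs2. communicable v" "\<forall>w\<in>set ws2. communicable w"
    "s2 = map_of (zip (bnl p2) vs2)" "r2 = map_of (zip (bnl q2) ws2)"
    "unify p2' q2' = Some (map_of (zip (bnl p2') vs2), map_of (zip (bnl q2') ws2))"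
    using t(2) unfolding unifier_transfers_def by blast
  show ?thesis unfolding unifier_transfers_def
    by (rule exI[of _ "vs1 @ vs2"], rule exI[of _ "ws1 @ ws2"])
      (use w1 w2 l d in \<open>auto simp: map_of_zip_append simp del: map_of_append zip_append\<close>)
qed

lemma unify_erase_bn:
  assumes "unify p q = Some (\<sigma>, \<rho>)" "erase_bn p' = erase_bn p" "erase_bn q' = erase_bn q"
    "distinct (bnl p)" "distinct (bnl q)" "distinct (bnl p')" "distinct (bnl q')"
  shows "unifier_transfers p q p' q' \<sigma> \<rho>"
  using assms
proof (induction p arbitrary: q p' q' \<sigma> \<rho>)
  case (PBind x)
  then have c: "communicable q" and e: "\<sigma> = [x \<mapsto> q]" "\<rho> = Map.empty" by (auto split: if_splits)
  obtain x' where "p' = PBind x'" using erase_bn_eqD(1)[of p'] PBind.prems by auto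
  moreover have "q' = q" using erase_bn_communicable[OF c] PBind.prems by simp
  ultimately show ?case using c e communicable_bnl[OF c] unfolding unifier_transfers_def
    by (intro exI[of _ "[q]"] exI[of _ "[]"]) auto
next
  case (PVar x)
  then have p': "p' = PVar x" by (simp add: erase_bn_eqD)
  show ?case
  proof (cases q)
    case (PBind y)
    then obtain y' where "q' = PBind y'" using erase_bn_eqD(1)[of q'] PVar.prems by auto
    then show ?thesis unfolding unifier_transfers_def using PVar.prems PBind p'
      by (intro exI[of _ "[]"] exI[of _ "[PVar x]"]) auto
  qed (use PVar.prems p' in \<open>auto simp: unifier_transfers_def split: if_splits
      dest: erase_bn_eqD(2,3)\<close>)
next
  case (PProt x)
  then have "p' = PProt x" by (simp add: erase_bn_eqD)
  then show ?case
    using PProt.prems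
    by (cases q) (auto simp: unifier_transfers_def split: if_splits dest: erase_bn_eqD(2,3))
next
  case (PComp p1 p2)
  show ?case
  proof (cases q)
    case (PBind y)
    then have c: "communicable (PComp p1 p2)" and e: "\<sigma> = Map.empty" "\<rho> = [y \<mapsto> PComp p1 p2]"
      using PComp.prems by (auto split: if_splits)
    obtain y' where "q' = PBind y'" using erase_bn_eqD(1)[of q'] PComp.prems PBind by auto
    moreover have "p' = PComp p1 p2" using erase_bn_communicable[OF c] PComp.prems by simp
    ultimately show ?thesis using c e PBind communicable_bnl[OF c] unfolding unifier_transfers_def
      by (intro exI[of _ "[]"] exI[of _ "[PComp p1 p2]"]) auto
  next
    case (PComp q1 q2)
    obtain p1' p2' where p': "p' = PComp p1' p2'" "erase_bn p1' = erase_bn p1" "erase_bn p2' = erase_bn p2"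
      using erase_bn_eqD(4)[of p'] PComp.prems(2) by force
    obtain q1' q2' where q': "q' = PComp q1' q2'" "erase_bn q1' = erase_bn q1" "erase_bn q2' = erase_bn q2"
      using erase_bn_eqD(4)[of q'] PComp.prems(3) \<open>q = PComp q1 q2\<close> by force
    from PComp.prems(1) \<open>q = _\<close> obtain s1 r1 s2 r2 where u: "unify p1 q1 = Some (s1, r1)"
      "unify p2 q2 = Some (s2, r2)" "\<sigma> = s1 ++ s2" "\<rho> = r1 ++ r2"
      by (auto split: option.splits)
    have "unifier_transfers p1 q1 p1' q1' s1 r1" "unifier_transfers p2 q2 p2' q2' s2 r2"
      using PComp.IH(1)[OF u(1) p'(2) q'(2)] PComp.IH(2)[OF u(2) p'(3) q'(3)] PComp.prems p' q' \<open>q = _\<close>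
      by auto
    then show ?thesis
      using u p' q' \<open>q = _\<close> PComp.prems length_bnl_erase_bn[OF p'(2)] length_bnl_erase_bn[OF q'(2)]
      by (auto intro!: unifier_transfers_PComp)
  qed (use PComp.prems in simp_all)
qed

lemma is_subst_unify:
  assumes "unify p q = Some (\<sigma>, \<rho>)" "wf_pat p" "wf_pat q"
  shows "is_subst \<sigma>" "is_subst \<rho>"
  using unify_erase_bn[OF assms(1) refl refl] assms(2,3)
  by (auto simp: unifier_transfers_def wf_pat_distinct intro: is_subst_map_of_zip)

lemma unify_names:
  "unify p q = Some (\<sigma>, \<rho>) \<Longrightarrow>
   subst_names \<sigma> UNIV \<subseteq> fn q \<and> subst_names \<rho> UNIV \<subseteq> fn p \<and> dom \<sigma> = bn p \<and> dom \<rho> = bn q"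
proof (induction p arbitrary: q \<sigma> \<rho>)
  case (PComp p1 p2)
  show ?case
  proof (cases q)
    case (PComp q1 q2)
    with PComp.prems obtain s1 r1 s2 r2 where u: "unify p1 q1 = Some (s1, r1)"
      "unify p2 q2 = Some (s2, r2)" "\<sigma> = s1 ++ s2" "\<rho> = r1 ++ r2"
      by (auto split: option.splits)
    then show ?thesis
      using PComp.IH(1)[OF u(1)] PComp.IH(2)[OF u(2)] \<open>q = _\<close>
        subst_names_map_add[of s1 s2 UNIV] subst_names_map_add[of r1 r2 UNIV]
      by (auto simp: dom_map_add)
  qed (use PComp.prems in \<open>auto simp: subst_names_def fn_def communicable_def split: if_splits\<close>)
next
  case (PBind x)
  then show ?case by (auto simp: subst_names_def fn_def communicable_def split: if_splits)
next
  case (PVar x)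
  then show ?case by (cases q) (auto simp: subst_names_def split: if_splits)
next
  case (PProt x)
  then show ?case by (cases q) (auto simp: subst_names_def split: if_splits)
qed

lemma fnp_reduct_subset:
  assumes u: "unify p q = Some (\<sigma>, \<rho>)" and wf: "wf_proc (Case p P)" "wf_proc (Case q Q)"
  shows "fnp (Par (psub \<sigma> P) (psub \<rho> Q)) \<subseteq> fnp (Case p P) \<union> fnp (Case q Q)"
proof -
  have s: "is_subst \<sigma>" "is_subst \<rho>" using is_subst_unify[OF u] wf by auto
  have "fnp (psub \<sigma> P) \<subseteq> (fnp P - dom \<sigma>) \<union> subst_names \<sigma> (fnp P)"
    "fnp (psub \<rho> Q) \<subseteq> (fnp Q - dom \<rho>) \<union> subst_names \<rho> (fnp Q)"
    using fnp_psub_subset s wf by auto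
  moreover have "subst_names \<sigma> (fnp P) \<subseteq> subst_names \<sigma> UNIV" "subst_names \<rho> (fnp Q) \<subseteq> subst_names \<rho> UNIV"
    by (simp_all add: subst_names_mono)
  ultimately show ?thesis using unify_names[OF u] by auto
qed

section \<open>Top-level guards up to structural congruence\<close>

text \<open>Structural congruence may alpha-rename the binders of a guard and rewrite its body; what
  it preserves is the shape of the pattern together with all instances of the body.\<close>

definition guard_equiv :: "proc \<Rightarrow> proc \<Rightarrow> bool" where
  "guard_equiv g g' \<longleftrightarrow> (\<exists>p P p' P'. g = Case p P \<and> g' = Case p' P' \<and> wf_proc g \<and> wf_proc g' \<and>
     erase_bn p = erase_bn p' \<and> fnp g = fnp g' \<and>
     (\<forall>vs. length vs = length (bnl p) \<longrightarrow> (\<forall>v\<in>set vs. communicable v) \<longrightarrow>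
        psub (map_of (zip (bnl p) vs)) P \<equiv>\<^sub>s psub (map_of (zip (bnl p') vs)) P'))"

lemma guard_equiv_CaseD:
  assumes "guard_equiv (Case p P) (Case p' P')"
  shows "erase_bn p = erase_bn p'" "wf_proc (Case p P)" "wf_proc (Case p' P')"
    "\<And>vs. length vs = length (bnl p) \<Longrightarrow> \<forall>v\<in>set vs. communicable v \<Longrightarrow>
       psub (map_of (zip (bnl p) vs)) P \<equiv>\<^sub>s psub (map_of (zip (bnl p') vs)) P'"
  using assms unfolding guard_equiv_def by auto

lemma guard_equiv_fnp: "guard_equiv g g' \<Longrightarrow> fnp g = fnp g'"
  unfolding guard_equiv_def by blast

lemma guard_equiv_refl: "wf_proc (Case p P) \<Longrightarrow> guard_equiv (Case p P) (Case p P)"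
  unfolding guard_equiv_def by (auto intro: s_refl)

lemma guard_equiv_sym: "guard_equiv g g' \<Longrightarrow> guard_equiv g' g"
  unfolding guard_equiv_def by (metis length_bnl_erase_bn s_sym)

lemma guard_equiv_trans: "guard_equiv g g' \<Longrightarrow> guard_equiv g' g'' \<Longrightarrow> guard_equiv g g''"
  unfolding guard_equiv_def by (smt (verit) length_bnl_erase_bn proc.inject(4) s_trans)

lemma guard_equiv_body:
  assumes wf: "wf_proc (Case p P)" and PP': "P \<equiv>\<^sub>s P'"
  shows "guard_equiv (Case p P) (Case p P')"
proof -
  have "psub (map_of (zip (bnl p) vs)) P \<equiv>\<^sub>s psub (map_of (zip (bnl p) vs)) P'"
    if "length vs = length (bnl p)" "\<forall>v\<in>set vs. communicable v" for vs
    using that wf PP' by (intro psub_scong is_subst_map_of_zip) auto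
  then show ?thesis
    using wf scong_wf[OF PP'] scong_fnp[OF PP'] unfolding guard_equiv_def by auto
qed

lemma map_of_zip_map_inj: "inj h \<Longrightarrow> map_of (zip (map h xs) vs) (h z) = map_of (zip xs vs) z"
proof (induction xs arbitrary: vs)
  case (Cons x xs)
  then show ?case by (cases vs) (auto simp: inj_eq)
qed simp

lemma guard_equiv_swap:
  assumes wf: "wf_proc (Case p P)" and ab: "a \<notin> fnp (Case p P)" "b \<notin> fnp (Case p P)"
  shows "guard_equiv (Case p P) (proc_swap a b (Case p P))"
proof -
  let ?h = "swapn a b"
  have fixed: "?h z = z" if "z \<in> fnp (Case p P)" for z
    using that ab by (intro swapn_simps(3)) auto
  have "psub (map_of (zip (bnl p) vs)) P \<equiv>\<^sub>s psub (map_of (zip (map ?h (bnl p)) vs)) (proc_ren ?h P)"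
    if l: "length vs = length (bnl p)" and c: "\<forall>v\<in>set vs. communicable v" for vs
  proof -
    have "subst_ren_commute (map_of (zip (bnl p) vs)) (map_of (zip (map ?h (bnl p)) vs)) ?h id (fnp P)"
      unfolding subst_ren_commute_def
    proof (intro ballI conjI impI)
      fix z assume z: "z \<in> fnp P"
      show "map_of (zip (map ?h (bnl p)) vs) (?h z) = map_option (pat_ren id) (map_of (zip (bnl p) vs) z)"
        by (simp add: map_of_zip_map_inj option.map_ident_strong)
      show "id z = ?h z" if "map_of (zip (bnl p) vs) z = None"
        using that z l fixed[of z] by (auto simp: bn_def)
    qed
    then show ?thesis
      using proc_ren_psub[of P _ _ ?h id] wf l c by (simp add: is_subst_map_of_zip)
  qed
  moreover have "erase_bn (pat_ren ?h p) = erase_bn p" using fixed by (intro erase_bn_ren_fixed) auto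
  moreover have "fnp (proc_swap a b (Case p P)) = fnp (Case p P)"
    using fnp_swap_fresh[OF ab] by (simp only: proc_swap_eq_ren)
  ultimately show ?thesis
    using wf wf_pat_ren wf_proc_ren unfolding guard_equiv_def
    by (auto simp: proc_swap_eq_ren)
qed

fun flat_guards :: "proc \<Rightarrow> proc multiset option" where
  "flat_guards Zero = Some {#}"
| "flat_guards (Par P Q) =
     (case (flat_guards P, flat_guards Q) of (Some M, Some N) \<Rightarrow> Some (M + N) | _ \<Rightarrow> None)"
| "flat_guards (Rep P) = None"
| "flat_guards (New n P) =
     (case flat_guards P of Some M \<Rightarrow> if \<forall>g\<in>#M. n \<notin> fnp g then Some M else None | None \<Rightarrow> None)"
| "flat_guards (Case p P) = Some {#Case p P#}"

lemma flat_guards_Par_Some: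
  "flat_guards (Par P Q) = Some K \<longleftrightarrow> (\<exists>M N. flat_guards P = Some M \<and> flat_guards Q = Some N \<and> K = M + N)"
  by (auto split: option.splits)

lemma flat_guards_New_Some:
  "flat_guards (New n P) = Some K \<longleftrightarrow> flat_guards P = Some K \<and> (\<forall>g\<in>#K. n \<notin> fnp g)"
  by (auto split: option.splits)

lemma flat_guards_member:
  assumes "flat_guards P = Some M" "g \<in># M"
  shows "\<exists>p Q. g = Case p Q" "fnp g \<subseteq> fnp P" "wf_proc P \<Longrightarrow> wf_proc g"
proof -
  have "(\<exists>p Q. g = Case p Q) \<and> fnp g \<subseteq> fnp P \<and> (wf_proc P \<longrightarrow> wf_proc g)"
    using assms
  proof (induction P arbitrary: M)
    case (Par P1 P2)
    then show ?case unfolding flat_guards_Par_Some by fastforce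
  next
    case (New n P)
    then show ?case unfolding flat_guards_New_Some by fastforce
  qed auto
  then show "\<exists>p Q. g = Case p Q" "fnp g \<subseteq> fnp P" "wf_proc P \<Longrightarrow> wf_proc g" by auto
qed

lemma fnp_flat_guards: "flat_guards P = Some M \<Longrightarrow> fnp P \<subseteq> (\<Union>g\<in>set_mset M. fnp g)"
proof (induction P arbitrary: M)
  case (Par P1 P2)
  then show ?case unfolding flat_guards_Par_Some by fastforce
next
  case (New n P)
  then show ?case unfolding flat_guards_New_Some by fastforce
qed auto

lemma flat_guards_empty: "flat_guards J = Some {#} \<Longrightarrow> J \<equiv>\<^sub>s Zero"
proof (induction J)
  case Zero
  show ?case by (rule s_refl)
next
  case (Par P Q)
  then have "P \<equiv>\<^sub>s Zero" "Q \<equiv>\<^sub>s Zero" unfolding flat_guards_Par_Some by auto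
  then have "Par P Q \<equiv>\<^sub>s Par Zero Zero" by (rule s_par)
  also have "\<dots> \<equiv>\<^sub>s Zero" by (rule s_par_zero)
  finally show ?case .
next
  case (New n P)
  then have "New n P \<equiv>\<^sub>s New n Zero" unfolding flat_guards_New_Some by (auto intro: s_new)
  also have "\<dots> \<equiv>\<^sub>s Zero" by (rule s_new_zero)
  finally show ?case .
qed auto

lemma flat_guards_ren:
  "inj h \<Longrightarrow> flat_guards (proc_ren h P) = map_option (image_mset (proc_ren h)) (flat_guards P)"
proof (induction P)
  case (Par P1 P2)
  then show ?case by (auto split: option.splits)
next
  case (New n P)
  have "(\<forall>g\<in>#image_mset (proc_ren h) M. h n \<notin> fnp g) \<longleftrightarrow> (\<forall>g\<in>#M. n \<notin> fnp g)" for M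
    using New.prems by (auto simp: fnp_proc_ren inj_image_mem_iff)
  then show ?case using New by (auto split: option.splits)
qed auto

lemma flat_guards_scope_extrusion:
  assumes "n \<notin> fnp P"
  shows "flat_guards (Par P (New n Q)) = flat_guards (New n (Par P Q))"
proof (cases "flat_guards P")
  case (Some M)
  then have "\<forall>g\<in>#M. n \<notin> fnp g" using assms flat_guards_member(2)[OF Some] by blast
  then show ?thesis using Some by (auto split: option.splits)
qed simp

lemma rel_mset_union: "rel_mset R M N \<Longrightarrow> rel_mset R M' N' \<Longrightarrow> rel_mset R (M + M') (N + N')"
  unfolding rel_mset_def by (metis list_all2_appendI mset_append)

lemma rel_mset_sym: "(\<And>x y. R x y \<Longrightarrow> R y x) \<Longrightarrow> rel_mset R M N \<Longrightarrow> rel_mset R N M"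
  by (metis conversep_iff multiset.rel_flip multiset.rel_mono_strong)

lemma rel_mset_trans:
  assumes "\<And>x y z. R x y \<Longrightarrow> R y z \<Longrightarrow> R x z" "rel_mset R M N" "rel_mset R N K"
  shows "rel_mset R M K"
proof -
  have "rel_mset (R OO R) M K" using assms(2,3) by (auto simp: multiset.rel_compp)
  then show ?thesis by (rule multiset.rel_mono_strong) (use assms(1) in blast)
qed

lemma rel_mset_image_eq:
  assumes "rel_mset R M N" "\<And>x y. R x y \<Longrightarrow> f x = f y"
  shows "image_mset f M = image_mset f N"
proof -
  have "rel_mset (\<lambda>x y. f x = f y) M N" using assms by (auto elim: multiset.rel_mono_strong)
  then have "rel_mset (=) (image_mset f M) (image_mset f N)" by (simp add: multiset.rel_map)
  then show ?thesis by (simp add: multiset.rel_eq)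
qed

lemma rel_option_guards_refl:
  "wf_proc P \<Longrightarrow> rel_option (rel_mset guard_equiv) (flat_guards P) (flat_guards P)"
  by (cases "flat_guards P")
    (auto intro!: multiset.rel_refl_strong guard_equiv_refl dest: flat_guards_member)

lemma flat_guards_swap:
  assumes wf: "wf_proc P" and ab: "a \<notin> fnp P" "b \<notin> fnp P"
  shows "rel_option (rel_mset guard_equiv) (flat_guards P) (flat_guards (proc_swap a b P))"
proof (cases "flat_guards P")
  case (Some M)
  have "guard_equiv g (proc_swap a b g)" if g: "g \<in># M" for g
  proof -
    obtain p Q where g_def: "g = Case p Q" using flat_guards_member(1)[OF Some g] by blast
    show ?thesis unfolding g_def
      by (rule guard_equiv_swap) (use flat_guards_member(2,3)[OF Some g] wf ab g_def in auto)
  qed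
  then have "rel_mset guard_equiv M (image_mset (proc_ren (swapn a b)) M)"
    by (auto simp: multiset.rel_map proc_swap_eq_ren intro!: multiset.rel_refl_strong)
  then show ?thesis using Some by (simp add: proc_swap_eq_ren flat_guards_ren)
qed (simp add: proc_swap_eq_ren flat_guards_ren)

lemma flat_guards_scong:
  "P \<equiv>\<^sub>s Q \<Longrightarrow> wf_proc P \<Longrightarrow> rel_option (rel_mset guard_equiv) (flat_guards P) (flat_guards Q)"
proof (induction rule: scong.induct)
  case (s_refl P)
  then show ?case by (rule rel_option_guards_refl)
next
  case (s_sym P Q)
  then have "rel_option (rel_mset guard_equiv) (flat_guards P) (flat_guards Q)"
    using scong_wf by blast
  then show ?case
    by (cases "flat_guards P"; cases "flat_guards Q") (auto intro: rel_mset_sym[OF guard_equiv_sym])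
next
  case (s_trans P Q R)
  then have "rel_option (rel_mset guard_equiv) (flat_guards P) (flat_guards Q)"
    "rel_option (rel_mset guard_equiv) (flat_guards Q) (flat_guards R)"
    using scong_wf by blast+
  then show ?case
    by (cases "flat_guards P"; cases "flat_guards Q"; cases "flat_guards R")
      (auto intro: rel_mset_trans[OF guard_equiv_trans])
next
  case (s_par P P' Q Q')
  then show ?case by (auto simp: option.rel_sel intro: rel_mset_union split: option.splits)
next
  case (s_new P P' n)
  then have "rel_option (rel_mset guard_equiv) (flat_guards P) (flat_guards P')" by simp
  moreover have "(\<forall>g\<in>#M. n \<notin> fnp g) \<longleftrightarrow> (\<forall>g\<in>#M'. n \<notin> fnp g)"
    if "rel_mset guard_equiv M M'" for M M'
  proof -
    have "image_mset fnp M = image_mset fnp M'" using that guard_equiv_fnp by (rule rel_mset_image_eq)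
    then have "fnp ` set_mset M = fnp ` set_mset M'" by (metis multiset.set_map)
    then show ?thesis by blast
  qed
  ultimately show ?case by (cases "flat_guards P"; cases "flat_guards P'") auto
next
  case (s_case P P' p)
  then show ?case by (simp add: guard_equiv_body rel_mset_Plus rel_mset_Zero)
next
  case (s_alpha a P b)
  then show ?case by (intro flat_guards_swap)
next
  case (s_par_zero P)
  then show ?case using rel_option_guards_refl[of P] by (cases "flat_guards P") auto
next
  case (s_par_comm P Q)
  then show ?case
    using rel_option_guards_refl[of "Par P Q"] by (auto simp: add.commute split: option.splits)
next
  case (s_par_assoc P Q R)
  then show ?case
    using rel_option_guards_refl[of "Par P (Par Q R)"] by (auto simp: add.assoc split: option.splits)
next
  case (s_new_new n m P)
  then show ?case
    using rel_option_guards_refl[of "New n (New m P)"] by (auto split: option.splits)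
next
  case (s_extr n P Q)
  then have "wf_proc (Par P (New n Q))" by simp
  then show ?case
    unfolding flat_guards_scope_extrusion[OF s_extr.hyps, symmetric] by (rule rel_option_guards_refl)
qed (auto split: option.splits)

section \<open>Inversion of communication\<close>

definition comm_result :: "proc multiset \<Rightarrow> proc \<Rightarrow> bool" where
  "comm_result M Y \<longleftrightarrow> (\<exists>p P q Q \<sigma> \<rho> N J.
     rel_mset guard_equiv ({#Case p P, Case q Q#} + N) M \<and> unify p q = Some (\<sigma>, \<rho>) \<and>
     flat_guards J = Some N \<and> wf_proc (Case p P) \<and> wf_proc (Case q Q) \<and>
     Y \<equiv>\<^sub>s Par (Par (psub \<sigma> P) (psub \<rho> Q)) J)"

lemma comm_result_Par:
  assumes "comm_result M A" "flat_guards B = Some N'" "wf_proc B"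
  shows "comm_result (M + N') (Par A B)"
proof -
  obtain p P q Q \<sigma> \<rho> N J where r: "rel_mset guard_equiv ({#Case p P, Case q Q#} + N) M"
    "unify p q = Some (\<sigma>, \<rho>)" "flat_guards J = Some N" "wf_proc (Case p P)" "wf_proc (Case q Q)"
    "A \<equiv>\<^sub>s Par (Par (psub \<sigma> P) (psub \<rho> Q)) J"
    using assms(1) unfolding comm_result_def by blast
  have "rel_mset guard_equiv N' N'"
    using rel_option_guards_refl[OF assms(3)] assms(2) by simp
  with r(1) have "rel_mset guard_equiv ({#Case p P, Case q Q#} + (N + N')) (M + N')"
    using rel_mset_union by (fastforce simp: add.assoc)
  moreover have "flat_guards (Par J B) = Some (N + N')" using r(3) assms(2) by simp
  moreover have "Par A B \<equiv>\<^sub>s Par (Par (psub \<sigma> P) (psub \<rho> Q)) (Par J B)"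
    using r(6) s_par[OF _ s_refl] s_sym[OF s_par_assoc] s_trans by blast
  ultimately show ?thesis using r unfolding comm_result_def by blast
qed

lemma comm_result_New:
  assumes "comm_result M A" "\<forall>g\<in>#M. n \<notin> fnp g"
  shows "comm_result M (New n A)"
proof -
  obtain p P q Q \<sigma> \<rho> N J where r: "rel_mset guard_equiv ({#Case p P, Case q Q#} + N) M"
    "unify p q = Some (\<sigma>, \<rho>)" "flat_guards J = Some N" "wf_proc (Case p P)" "wf_proc (Case q Q)"
    "A \<equiv>\<^sub>s Par (Par (psub \<sigma> P) (psub \<rho> Q)) J"
    using assms(1) unfolding comm_result_def by blast
  have "image_mset fnp ({#Case p P, Case q Q#} + N) = image_mset fnp M"
    using r(1) guard_equiv_fnp by (rule rel_mset_image_eq)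
  then have "\<forall>g\<in>#{#Case p P, Case q Q#} + N. n \<notin> fnp g"
    using assms(2) by (metis (no_types, lifting) imageE image_eqI multiset.set_map)
  then have "n \<notin> fnp (Par (Par (psub \<sigma> P) (psub \<rho> Q)) J)"
    using fnp_reduct_subset[OF r(2,4,5)] fnp_flat_guards[OF r(3)] by auto
  then have "New n A \<equiv>\<^sub>s Par (Par (psub \<sigma> P) (psub \<rho> Q)) J"
    using s_new[OF r(6)] scong_New_vacuous s_trans by blast
  then show ?thesis using r unfolding comm_result_def by blast
qed

lemma comm_result_cong:
  assumes "comm_result M0 B0" "rel_mset guard_equiv M M0" "B0 \<equiv>\<^sub>s B"
  shows "comm_result M B"
proof -
  obtain p P q Q \<sigma> \<rho> N J where r: "rel_mset guard_equiv ({#Case p P, Case q Q#} + N) M0"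
    "unify p q = Some (\<sigma>, \<rho>)" "flat_guards J = Some N" "wf_proc (Case p P)" "wf_proc (Case q Q)"
    "B0 \<equiv>\<^sub>s Par (Par (psub \<sigma> P) (psub \<rho> Q)) J"
    using assms(1) unfolding comm_result_def by blast
  have "rel_mset guard_equiv ({#Case p P, Case q Q#} + N) M"
    using rel_mset_trans[OF guard_equiv_trans r(1) rel_mset_sym[OF guard_equiv_sym assms(2)]] .
  moreover have "B \<equiv>\<^sub>s Par (Par (psub \<sigma> P) (psub \<rho> Q)) J" using s_trans[OF s_sym[OF assms(3)] r(6)] .
  ultimately show ?thesis using r unfolding comm_result_def by blast
qed

lemma red_comm_result: "Y \<longmapsto> Y' \<Longrightarrow> wf_proc Y \<Longrightarrow> flat_guards Y = Some M \<Longrightarrow> comm_result M Y'"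
proof (induction arbitrary: M rule: red.induct)
  case (r_comm p q \<sigma> \<rho> P Q)
  then have "rel_mset guard_equiv ({#Case p P, Case q Q#} + {#}) M"
    by (auto simp: add_mset_commute intro!: multiset.rel_refl_strong guard_equiv_refl)
  then show ?case
    using r_comm s_sym[OF s_par_zero] unfolding comm_result_def
    by (intro exI[of _ p] exI[of _ P] exI[of _ q] exI[of _ Q] exI[of _ \<sigma>] exI[of _ \<rho>]
        exI[of _ "{#}"] exI[of _ Zero]) auto
next
  case (r_par A A' B)
  then show ?case unfolding flat_guards_Par_Some by (auto intro: comm_result_Par)
next
  case (r_new A A' n)
  then show ?case unfolding flat_guards_New_Some by (auto intro: comm_result_New)
next
  case (r_struct A A0 B0 B)
  have "rel_option (rel_mset guard_equiv) (flat_guards A) (flat_guards A0)"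
    using flat_guards_scong[OF r_struct.hyps(1) r_struct.prems(1)] .
  then obtain M0 where "flat_guards A0 = Some M0" "rel_mset guard_equiv M M0"
    using r_struct.prems(2) by (cases "flat_guards A0") auto
  then show ?case
    using r_struct scong_wf[OF r_struct.hyps(1)] by (blast intro: comm_result_cong)
qed

lemma guard_equiv_comm:
  assumes p: "guard_equiv (Case p1 P1) (Case p P)" and q: "guard_equiv (Case q1 Q1) (Case q Q)"
    and u: "unify p1 q1 = Some (\<sigma>1, \<rho>1)"
  obtains \<sigma> \<rho> where "unify p q = Some (\<sigma>, \<rho>)" "Par (psub \<sigma>1 P1) (psub \<rho>1 Q1) \<equiv>\<^sub>s Par (psub \<sigma> P) (psub \<rho> Q)"
proof -
  note gp = guard_equiv_CaseD[OF p] and gq = guard_equiv_CaseD[OF q]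
  have "unifier_transfers p1 q1 p q \<sigma>1 \<rho>1"
    using gp gq by (intro unify_erase_bn[OF u]) (auto simp: wf_pat_distinct)
  then obtain vs ws where vs: "length vs = length (bnl p1)" "length ws = length (bnl q1)"
    "\<forall>v\<in>set vs. communicable v" "\<forall>w\<in>set ws. communicable w"
    "\<sigma>1 = map_of (zip (bnl p1) vs)" "\<rho>1 = map_of (zip (bnl q1) ws)"
    "unify p q = Some (map_of (zip (bnl p) vs), map_of (zip (bnl q) ws))"
    unfolding unifier_transfers_def by blast
  show thesis
  proof (rule that[OF vs(7)])
    show "Par (psub \<sigma>1 P1) (psub \<rho>1 Q1)
        \<equiv>\<^sub>s Par (psub (map_of (zip (bnl p) vs)) P) (psub (map_of (zip (bnl q) ws)) Q)"
      using gp(4)[OF vs(1,3)] gq(4)[OF vs(2,4)] vs(5,6) by (simp add: s_par)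
  qed
qed

lemma rel_mset_pair: "rel_mset R {#a, b#} {#c, d#} \<Longrightarrow> (R a c \<and> R b d) \<or> (R a d \<and> R b c)"
proof -
  assume r: "rel_mset R {#a, b#} {#c, d#}"
  obtain N1 e where e: "{#c, d#} = add_mset e N1" "R a e" "rel_mset R {#b#} N1"
    using msed_rel_invL[OF r] by blast
  obtain N2 f where f: "N1 = add_mset f N2" "R b f" "rel_mset R {#} N2"
    using msed_rel_invL[OF e(3)] by blast
  have "{#c, d#} = {#e, f#}" using e(1) f by simp
  then have "(e = c \<and> f = d) \<or> (e = d \<and> f = c)" by (auto simp: add_eq_conv_diff)
  then show ?thesis using e f by auto
qed

lemma red_two_guards:
  assumes "Par (Case p P) (Case q Q) \<longmapsto> Y" "wf_proc (Case p P)" "wf_proc (Case q Q)"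
  obtains \<sigma> \<rho> where "unify p q = Some (\<sigma>, \<rho>)" "Y \<equiv>\<^sub>s Par (psub \<sigma> P) (psub \<rho> Q)"
    | \<sigma> \<rho> where "unify q p = Some (\<sigma>, \<rho>)" "Y \<equiv>\<^sub>s Par (psub \<sigma> Q) (psub \<rho> P)"
proof -
  have "comm_result {#Case p P, Case q Q#} Y"
    by (rule red_comm_result[OF assms(1)]) (use assms(2,3) in auto)
  then obtain p1 P1 q1 Q1 \<sigma>1 \<rho>1 N J where
    r: "rel_mset guard_equiv ({#Case p1 P1, Case q1 Q1#} + N) {#Case p P, Case q Q#}"
    and u: "unify p1 q1 = Some (\<sigma>1, \<rho>1)" and J: "flat_guards J = Some N"
    and Y: "Y \<equiv>\<^sub>s Par (Par (psub \<sigma>1 P1) (psub \<rho>1 Q1)) J"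
    unfolding comm_result_def by blast
  have "N = {#}" using rel_mset_size[OF r] by simp
  then have "J \<equiv>\<^sub>s Zero" using flat_guards_empty J by simp
  then have "Y \<equiv>\<^sub>s Par (Par (psub \<sigma>1 P1) (psub \<rho>1 Q1)) Zero" using Y s_par[OF s_refl] s_trans by blast
  then have Y': "Y \<equiv>\<^sub>s Par (psub \<sigma>1 P1) (psub \<rho>1 Q1)" using s_par_zero s_trans by blast
  have "(guard_equiv (Case p1 P1) (Case p P) \<and> guard_equiv (Case q1 Q1) (Case q Q)) \<or>
      (guard_equiv (Case p1 P1) (Case q Q) \<and> guard_equiv (Case q1 Q1) (Case p P))"
    using rel_mset_pair r \<open>N = {#}\<close> by simp
  then show thesis
  proof (elim disjE conjE)
    assume "guard_equiv (Case p1 P1) (Case p P)" "guard_equiv (Case q1 Q1) (Case q Q)"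
    then obtain \<sigma> \<rho> where "unify p q = Some (\<sigma>, \<rho>)"
      "Par (psub \<sigma>1 P1) (psub \<rho>1 Q1) \<equiv>\<^sub>s Par (psub \<sigma> P) (psub \<rho> Q)"
      by (rule guard_equiv_comm[OF _ _ u])
    then show thesis using that(1) Y' s_trans by blast
  next
    assume "guard_equiv (Case p1 P1) (Case q Q)" "guard_equiv (Case q1 Q1) (Case p P)"
    then obtain \<sigma> \<rho> where "unify q p = Some (\<sigma>, \<rho>)"
      "Par (psub \<sigma>1 P1) (psub \<rho>1 Q1) \<equiv>\<^sub>s Par (psub \<sigma> Q) (psub \<rho> P)"
      by (rule guard_equiv_comm[OF _ _ u])
    then show thesis using that(2) Y' s_trans by blast
  qed
qed

lemma barbed_congI:
  "on_procs R \<Longrightarrow> symp R \<Longrightarrow> barb_preserving R \<Longrightarrow> reduction_closed R \<Longrightarrow> context_closed R \<Longrightarrow>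
   R P Q \<Longrightarrow> P \<simeq> Q"
  unfolding barbed_cong_def by blast

lemma barbed_congE:
  assumes "P \<simeq> Q"
  obtains R where "on_procs R" "symp R" "barb_preserving R" "reduction_closed R" "context_closed R"
    "R P Q"
  using assms unfolding barbed_cong_def by blast

lemma red_wf: "Y \<longmapsto> Y' \<Longrightarrow> wf_proc Y \<Longrightarrow> wf_proc Y'"
proof (induction rule: red.induct)
  case (r_comm p q \<sigma> \<rho> P Q)
  then show ?case using is_subst_unify[OF r_comm.hyps] by (auto intro: wf_psub)
next
  case (r_struct P P0 Q0 Q)
  then show ?case using scong_wf by blast
qed auto

lemma wf_fill: "wf_ctx C \<Longrightarrow> wf_proc P \<Longrightarrow> wf_proc (fill C P)"
  by (induction C) auto

lemma scong_fill: "P \<equiv>\<^sub>s Q \<Longrightarrow> fill C P \<equiv>\<^sub>s fill C Q"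
  by (induction C) (auto intro: s_par s_refl s_rep s_new s_case)

lemma scong_imp_barbed_cong: "P \<equiv>\<^sub>s Q \<Longrightarrow> wf_proc P \<Longrightarrow> P \<simeq> Q"
proof (rule barbed_congI)
  let ?R = "\<lambda>A B. A \<equiv>\<^sub>s B \<and> wf_proc A \<and> wf_proc B"
  show "on_procs ?R" unfolding on_procs_def by blast
  show "symp ?R" unfolding symp_def by (blast intro: s_sym)
  show "barb_preserving ?R" unfolding barb_preserving_def barb_def by (blast intro: s_trans s_sym)
  show "reduction_closed ?R" unfolding reduction_closed_def
    by (blast intro: r_struct s_sym s_refl red_wf)
  show "context_closed ?R" unfolding context_closed_def using scong_fill wf_fill by blast
  show "?R P Q" if "P \<equiv>\<^sub>s Q" "wf_proc P" using that scong_wf by blast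
qed

lemma reduction_closed_relcompp:
  assumes "reduction_closed R1" "reduction_closed R2"
  shows "reduction_closed (R1 OO R2)"
  unfolding reduction_closed_def
proof (intro allI impI)
  fix A B A' assume "(R1 OO R2) A B" "A \<longmapsto> A'"
  then obtain X where X: "R1 A X" "R2 X B" by blast
  obtain X' where X': "X \<longmapsto> X'" "R1 A' X'"
    using assms(1) X(1) \<open>A \<longmapsto> A'\<close> unfolding reduction_closed_def by blast
  obtain B' where "B \<longmapsto> B'" "R2 X' B'"
    using assms(2) X(2) X'(1) unfolding reduction_closed_def by blast
  with X'(2) show "\<exists>B'. B \<longmapsto> B' \<and> (R1 OO R2) A' B'" by blast
qed

lemma barbed_cong_trans [trans]:
  assumes "P \<simeq> Q" "Q \<simeq> T"
  shows "P \<simeq> T"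
proof -
  obtain R1 where R1: "on_procs R1" "symp R1" "barb_preserving R1" "reduction_closed R1"
      "context_closed R1" "R1 P Q"
    using assms(1) by (rule barbed_congE)
  obtain R2 where R2: "on_procs R2" "symp R2" "barb_preserving R2" "reduction_closed R2"
      "context_closed R2" "R2 Q T"
    using assms(2) by (rule barbed_congE)
  let ?S = "\<lambda>A B. (R1 OO R2) A B \<or> (R2 OO R1) A B"
  show ?thesis
  proof (rule barbed_congI)
    show "on_procs ?S" using R1(1) R2(1) unfolding on_procs_def by blast
    show "symp ?S" using R1(2) R2(2) unfolding symp_def by blast
    show "barb_preserving ?S" using R1(3) R2(3) unfolding barb_preserving_def by blast
    show "reduction_closed ?S"
      using reduction_closed_relcompp[OF R1(4) R2(4)] reduction_closed_relcompp[OF R2(4) R1(4)]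
      unfolding reduction_closed_def by blast
    show "context_closed ?S" using R1(5) R2(5) unfolding context_closed_def by blast
    show "?S P T" using R1(6) R2(6) by blast
  qed
qed

section \<open>Substitution as communication\<close>

fun binders_pat :: "name list \<Rightarrow> pat" where
  "binders_pat [] = PBind 0"
| "binders_pat [x] = PBind x"
| "binders_pat (x # y # xs) = PComp (PBind x) (binders_pat (y # xs))"

fun values_pat :: "pat list \<Rightarrow> pat" where
  "values_pat [] = PVar 0"
| "values_pat [v] = v"
| "values_pat (v # w # vs) = PComp v (values_pat (w # vs))"

lemma bnl_fn_binders_pat: "xs \<noteq> [] \<Longrightarrow> bnl (binders_pat xs) = xs \<and> fn (binders_pat xs) = {}"
  by (induction xs rule: binders_pat.induct) auto

lemma communicable_values_pat:
  "vs \<noteq> [] \<Longrightarrow> \<forall>v\<in>set vs. communicable v \<Longrightarrow> communicable (values_pat vs)"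
  by (induction vs rule: values_pat.induct) auto

lemma unify_binders_values:
  assumes "length xs = length vs" "xs \<noteq> []" "distinct xs" "\<forall>v\<in>set vs. communicable v"
  shows "unify (binders_pat xs) (values_pat vs) = Some (map_of (zip xs vs), Map.empty)"
    "unify (values_pat vs) (binders_pat xs) = Some (Map.empty, map_of (zip xs vs))"
proof -
  have unify_bind: "communicable v \<Longrightarrow> unify v (PBind x) = Some (Map.empty, [x \<mapsto> v])" for v x
    by (cases v) auto
  have "unify (binders_pat xs) (values_pat vs) = Some (map_of (zip xs vs), Map.empty) \<and>
      unify (values_pat vs) (binders_pat xs) = Some (Map.empty, map_of (zip xs vs))"
    using assms
  proof (induction xs arbitrary: vs rule: binders_pat.induct)
    case (2 x)
    then obtain v where "vs = [v]" by (cases vs) auto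
    with 2 show ?case by (auto simp: unify_bind)
  next
    case (3 x y xs)
    then obtain v w ws where vs: "vs = v # w # ws" by (cases vs; cases "tl vs") auto
    have "map_of (zip (x # y # xs) (v # w # ws)) = [x \<mapsto> v] ++ map_of (zip (y # xs) (w # ws))"
      using map_of_zip_append[of "[x]" "[v]" "y # xs" "w # ws"] 3 vs by simp
    with 3 vs show ?case by (auto simp: unify_bind)
  qed simp
  then show "unify (binders_pat xs) (values_pat vs) = Some (map_of (zip xs vs), Map.empty)"
    "unify (values_pat vs) (binders_pat xs) = Some (Map.empty, map_of (zip xs vs))" by auto
qed

lemma map_of_zip_graph:
  assumes "finite (dom \<sigma>)"
  shows "map_of (zip (sorted_list_of_set (dom \<sigma>)) (map (\<lambda>z. the (\<sigma> z)) (sorted_list_of_set (dom \<sigma>)))) = \<sigma>"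
  using assms by (auto simp: map_of_zip_map fun_eq_iff) (metis option.collapse)

lemma subst_context_nonempty:
  assumes s: "is_subst \<sigma>" and ne: "dom \<sigma> \<noteq> {}"
  obtains C where "wf_ctx C" "\<And>P. fill C P \<longmapsto> Par (psub \<sigma> P) Zero"
    "\<And>P Y. wf_proc P \<Longrightarrow> fill C P \<longmapsto> Y \<Longrightarrow> Y \<equiv>\<^sub>s psub \<sigma> P"
proof -
  define xs where "xs = sorted_list_of_set (dom \<sigma>)"
  define vs where "vs = map (\<lambda>z. the (\<sigma> z)) xs"
  have fin: "finite (dom \<sigma>)" using s by (rule finite_dom_subst)
  have xs: "distinct xs" "set xs = dom \<sigma>" "xs \<noteq> []" "length xs = length vs"
    using fin ne by (auto simp: xs_def vs_def)
  have vs: "\<forall>v\<in>set vs. communicable v"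
    using xs(2) is_subst_communicable[OF s] by (auto simp: vs_def)
  have \<sigma>: "map_of (zip xs vs) = \<sigma>" unfolding xs_def vs_def using fin by (rule map_of_zip_graph)
  let ?p = "binders_pat xs" and ?q = "values_pat vs"
  have "vs \<noteq> []" using xs(3,4) by auto
  then have "communicable ?q" using vs by (rule communicable_values_pat)
  then have wf: "wf_pat ?p" "wf_pat ?q"
    using bnl_fn_binders_pat[OF xs(3)] xs(1) communicable_bnl by (auto simp: wf_pat_def bn_def)
  note u = unify_binders_values[OF xs(4,3,1) vs, unfolded \<sigma>]
  show thesis
  proof (rule that[of "CParL (CCase ?p Hole) (Case ?q Zero)"])
    show "wf_ctx (CParL (CCase ?p Hole) (Case ?q Zero))" using wf by simp
    show "fill (CParL (CCase ?p Hole) (Case ?q Zero)) P \<longmapsto> Par (psub \<sigma> P) Zero" for P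
      using r_comm[OF u(1), of P Zero] by simp
    show "Y \<equiv>\<^sub>s psub \<sigma> P" if "wf_proc P" "fill (CParL (CCase ?p Hole) (Case ?q Zero)) P \<longmapsto> Y" for P Y
    proof -
      have "Par (Case ?p P) (Case ?q Zero) \<longmapsto> Y" using that(2) by simp
      then show ?thesis
      proof (rule red_two_guards)
        fix \<sigma>' \<rho>' assume "unify ?p ?q = Some (\<sigma>', \<rho>')" "Y \<equiv>\<^sub>s Par (psub \<sigma>' P) (psub \<rho>' Zero)"
        then show ?thesis using u(1) by (auto intro: s_trans s_par_zero)
      next
        fix \<sigma>' \<rho>' assume "unify ?q ?p = Some (\<sigma>', \<rho>')" "Y \<equiv>\<^sub>s Par (psub \<sigma>' Zero) (psub \<rho>' P)"
        then have "Y \<equiv>\<^sub>s Par Zero (psub \<sigma> P)" using u(2) by simp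
        then show ?thesis using s_par_comm s_par_zero s_trans by blast
      qed (use wf that(1) in simp_all)
    qed
  qed
qed

lemma subst_context:
  assumes s: "is_subst \<sigma>" and X: "finite X"
  obtains C where "wf_ctx C"
    "\<And>P. fnp P \<subseteq> X \<Longrightarrow> wf_proc P \<Longrightarrow> \<exists>Y. fill C P \<longmapsto> Y \<and> Y \<equiv>\<^sub>s psub \<sigma> P"
    "\<And>P Y. fnp P \<subseteq> X \<Longrightarrow> wf_proc P \<Longrightarrow> fill C P \<longmapsto> Y \<Longrightarrow> Y \<equiv>\<^sub>s psub \<sigma> P"
proof -
  \<comment> \<open>The context needs at least one binder; the identity on a fresh name provides one.\<close>
  obtain x0 where x0: "x0 \<notin> X \<union> dom \<sigma>"
    using fresh_notin X s by (metis finite_Un finite_dom_subst)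
  define \<sigma>0 where "\<sigma>0 = \<sigma>(x0 \<mapsto> PVar x0)"
  have s0: "is_subst \<sigma>0" using s by (simp add: \<sigma>0_def is_subst_upd)
  have eq: "psub \<sigma>0 P \<equiv>\<^sub>s psub \<sigma> P" if "fnp P \<subseteq> X" "wf_proc P" for P
    using that x0 s s0 by (intro psub_cong) (auto simp: \<sigma>0_def)
  obtain C where C: "wf_ctx C" "\<And>P. fill C P \<longmapsto> Par (psub \<sigma>0 P) Zero"
    "\<And>P Y. wf_proc P \<Longrightarrow> fill C P \<longmapsto> Y \<Longrightarrow> Y \<equiv>\<^sub>s psub \<sigma>0 P"
    by (rule subst_context_nonempty[OF s0]) (auto simp: \<sigma>0_def)
  show thesis
  proof (rule that[OF C(1)])
    show "\<exists>Y. fill C P \<longmapsto> Y \<and> Y \<equiv>\<^sub>s psub \<sigma> P" if "fnp P \<subseteq> X" "wf_proc P" for P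
      using C(2)[of P] s_par_zero eq[OF that] s_trans by blast
    show "Y \<equiv>\<^sub>s psub \<sigma> P" if "fnp P \<subseteq> X" "wf_proc P" "fill C P \<longmapsto> Y" for P Y
      using C(3)[OF that(2,3)] eq[OF that(1,2)] s_trans by blast
  qed
qed

theorem lemma3p33:
  fixes P Q :: proc and \<sigma> :: subst
  assumes "is_subst \<sigma>"
    and "P \<simeq> Q"
  shows "psub \<sigma> P \<simeq> psub \<sigma> Q"
proof -
  obtain R where R: "on_procs R" "symp R" "barb_preserving R" "reduction_closed R" "context_closed R"
    "R P Q"
    using assms(2) by (rule barbed_congE)
  then have wf: "wf_proc P" "wf_proc Q" unfolding on_procs_def by auto
  obtain C where C: "wf_ctx C"
    "\<And>P'. fnp P' \<subseteq> fnp P \<union> fnp Q \<Longrightarrow> wf_proc P' \<Longrightarrow> \<exists>Y. fill C P' \<longmapsto> Y \<and> Y \<equiv>\<^sub>s psub \<sigma> P'"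
    "\<And>P' Y. fnp P' \<subseteq> fnp P \<union> fnp Q \<Longrightarrow> wf_proc P' \<Longrightarrow> fill C P' \<longmapsto> Y \<Longrightarrow> Y \<equiv>\<^sub>s psub \<sigma> P'"
    by (rule subst_context[OF assms(1), where X = "fnp P \<union> fnp Q"]) auto
  obtain Y0 where Y0: "fill C P \<longmapsto> Y0" "Y0 \<equiv>\<^sub>s psub \<sigma> P" using C(2) wf(1) by blast
  have "R (fill C P) (fill C Q)" using R(5,6) C(1) unfolding context_closed_def by blast
  then obtain Y where Y: "fill C Q \<longmapsto> Y" "R Y0 Y"
    using R(4) Y0(1) unfolding reduction_closed_def by blast
  have "psub \<sigma> P \<simeq> Y0"
    using s_sym[OF Y0(2)] wf_psub[OF wf(1) assms(1)] by (rule scong_imp_barbed_cong)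
  also have "Y0 \<simeq> Y" using R(1-5) Y(2) by (rule barbed_congI)
  also have "Y \<simeq> psub \<sigma> Q"
    using C(3)[OF _ wf(2) Y(1)] Y(2) R(1) unfolding on_procs_def by (blast intro: scong_imp_barbed_cong)
  finally show ?thesis .
qed

end
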